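(* Let $X$ be a locally convex space, let $T:X\rightrightarrows X^{*}$, and let $V\subset X$ with $V\cap D(T)\neq\emptyset$. Consider: (i) $T|_{V}\in\mathcal{M}(X)$ and $V$ identifies $T$; (ii) $T$ is $V$-representable and $V$ locates $T$; (iii) $T$ is $V$-representable and $V$-NI. Then (i) $\Rightarrow$ (ii) $\Rightarrow$ (iii). If, in addition, $V$ is algebraically open, then (i), (ii), (iii) are equivalent.
   Context: $(X,\tau)$ is a non-trivial Hausdorff locally convex space, $X^*$ its dual with weak-star topology $\omega^*$, $Z=X\times X^*$ with topology $\tau\times\omega^*$, $c(x,x^* )=\langle x,x^*\rangle$. Operators are identified with their graphs; $D(T)$ is the domain; $T|_V$ has graph $\operatorname{Graph}T\cap(V\times X^* )$. $\varphi_{T}(x,x^{*})=\sup\{\langle x,u^{*}\rangle+\langle u,x^{*}\rangle-\langle u,u^{*}\rangle\mid(u,u^{*})\in T\}$ ($\sup\emptyset=-\infty$); $[f\le g]=\{z\mid f(z)\le g(z)\}$. $\mathcal M(X)$: monotone operators with non-empty graph. $\mathscr R$: proper convex $\tau\times\omega^*$-lsc $h:Z\to\overline{\mathbb R}$ with $h\ge c$. $T$ is $V$-representable if $V\cap D(T)\ne\emptyset$ and there is $h\in\mathscr R$ with $[h=c]\cap(V\times X^* )=\operatorname{Graph}(T|_V)$. $V$ identifies $T$ if $[\varphi_{T|_V}\le c]\cap(V\times X^* )\subset\operatorname{Graph}T$; $V$ locates $T$ if $\operatorname{Pr}_X([\varphi_{T|_V}\le c])\cap V\subset D(T)$; $T$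 is $V$-NI if $\varphi_{T|_V}\ge c$ on $V\times X^*$. $V$ is algebraically open if $V$ equals its algebraic interior (core). *)

theory Defs
  imports "HOL-Analysis.Analysis"
begin

text \<open>An operator T : X \<rightrightarrows> X* is identified with its graph, a set of pairs.\<close>

definition lcs :: "'a::real_vector topology \<Rightarrow> bool" where
  "lcs tau \<longleftrightarrow> topspace tau = UNIV
     \<and> continuous_map (prod_topology tau tau) tau (\<lambda>(x, y). x + y)
     \<and> continuous_map (prod_topology euclideanreal tau) tau (\<lambda>(a, x). a *\<^sub>R x)
     \<and> Hausdorff_space tau
     \<and> (\<forall>U. openin tau U \<and> 0 \<in> U \<longrightarrow> (\<exists>W. openin tau W \<and> convex W \<and> 0 \<in> W \<and> W \<subseteq> U))"

definition dual_space :: "'a::real_vector topology \<Rightarrow> ('a \<Rightarrow> real) set" where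
  "dual_space tau = {f. linear f \<and> continuous_map tau euclideanreal f}"

definition weak_star :: "'a::real_vector topology \<Rightarrow> ('a \<Rightarrow> real) topology" where
  "weak_star tau = subtopology (product_topology (\<lambda>_::'a. euclideanreal) UNIV) (dual_space tau)"

definition Ztop :: "'a::real_vector topology \<Rightarrow> ('a \<times> ('a \<Rightarrow> real)) topology" where
  "Ztop tau = prod_topology tau (weak_star tau)"

definition Zset :: "'a::real_vector topology \<Rightarrow> ('a \<times> ('a \<Rightarrow> real)) set" where
  "Zset tau = UNIV \<times> dual_space tau"

definition cpl :: "'a \<times> ('a \<Rightarrow> real) \<Rightarrow> ereal" where
  "cpl z = ereal (snd z (fst z))"

definition fitz :: "('a::real_vector \<times> ('a \<Rightarrow> real)) set \<Rightarrow> 'a \<times> ('a \<Rightarrow> real) \<Rightarrow> ereal" where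
  "fitz T z = Sup {ereal (snd z u + us (fst z) - us u) | u us. (u, us) \<in> T}"

definition restr :: "('a \<times> 'b) set \<Rightarrow> 'a set \<Rightarrow> ('a \<times> 'b) set" where
  "restr T V = T \<inter> (V \<times> UNIV)"

definition monotone_op :: "('a::real_vector \<times> ('a \<Rightarrow> real)) set \<Rightarrow> bool" where
  "monotone_op T \<longleftrightarrow> (\<forall>x f y g. (x, f) \<in> T \<and> (y, g) \<in> T \<longrightarrow> f x - f y - g x + g y \<ge> 0)"

definition M_class :: "('a::real_vector \<times> ('a \<Rightarrow> real)) set \<Rightarrow> bool" where
  "M_class T \<longleftrightarrow> monotone_op T \<and> T \<noteq> {}"

text \<open>convexity of an extended-real function on Z = X \<times> X* (epigraph convexity)\<close>
definition convex_Z :: "'a::real_vector topology \<Rightarrow> ('a \<times> ('a \<Rightarrow> real) \<Rightarrow> ereal) \<Rightarrow> bool" where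
  "convex_Z tau h \<longleftrightarrow> (\<forall>x f y g r s t. (x, f) \<in> Zset tau \<and> (y, g) \<in> Zset tau
      \<and> h (x, f) \<le> ereal r \<and> h (y, g) \<le> ereal s \<and> 0 \<le> t \<and> t \<le> 1 \<longrightarrow>
      h (t *\<^sub>R x + (1 - t) *\<^sub>R y, \<lambda>u. t * f u + (1 - t) * g u) \<le> ereal (t * r + (1 - t) * s))"

definition proper_Z :: "'a::real_vector topology \<Rightarrow> ('a \<times> ('a \<Rightarrow> real) \<Rightarrow> ereal) \<Rightarrow> bool" where
  "proper_Z tau h \<longleftrightarrow> (\<forall>z \<in> Zset tau. h z > -\<infinity>) \<and> (\<exists>z \<in> Zset tau. h z < \<infinity>)"

definition lsc_Z :: "'a::real_vector topology \<Rightarrow> ('a \<times> ('a \<Rightarrow> real) \<Rightarrow> ereal) \<Rightarrow> bool" where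
  "lsc_Z tau h \<longleftrightarrow> (\<forall>r::real. closedin (Ztop tau) {z \<in> topspace (Ztop tau). h z \<le> ereal r})"

definition R_class :: "'a::real_vector topology \<Rightarrow> ('a \<times> ('a \<Rightarrow> real) \<Rightarrow> ereal) set" where
  "R_class tau = {h. proper_Z tau h \<and> convex_Z tau h \<and> lsc_Z tau h \<and> (\<forall>z \<in> Zset tau. h z \<ge> cpl z)}"

definition V_representable :: "'a::real_vector topology \<Rightarrow> 'a set \<Rightarrow> ('a \<times> ('a \<Rightarrow> real)) set \<Rightarrow> bool" where
  "V_representable tau V T \<longleftrightarrow> V \<inter> Domain T \<noteq> {}
     \<and> (\<exists>h \<in> R_class tau. {z \<in> Zset tau. h z = cpl z} \<inter> (V \<times> UNIV) = restr T V)"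

definition V_identifies :: "'a::real_vector topology \<Rightarrow> 'a set \<Rightarrow> ('a \<times> ('a \<Rightarrow> real)) set \<Rightarrow> bool" where
  "V_identifies tau V T \<longleftrightarrow> {z \<in> Zset tau. fitz (restr T V) z \<le> cpl z} \<inter> (V \<times> UNIV) \<subseteq> T"

definition V_locates :: "'a::real_vector topology \<Rightarrow> 'a set \<Rightarrow> ('a \<times> ('a \<Rightarrow> real)) set \<Rightarrow> bool" where
  "V_locates tau V T \<longleftrightarrow> fst ` {z \<in> Zset tau. fitz (restr T V) z \<le> cpl z} \<inter> V \<subseteq> Domain T"

definition V_NI :: "'a::real_vector topology \<Rightarrow> 'a set \<Rightarrow> ('a \<times> ('a \<Rightarrow> real)) set \<Rightarrow> bool" where
  "V_NI tau V T \<longleftrightarrow> (\<forall>z \<in> Zset tau. fst z \<in> V \<longrightarrow> fitz (restr T V) z \<ge> cpl z)"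

definition core :: "'a::real_vector set \<Rightarrow> 'a set" where
  "core V = {x \<in> V. \<forall>d. \<exists>e>0. \<forall>t. 0 \<le> t \<and> t \<le> e \<longrightarrow> x + t *\<^sub>R d \<in> V}"

definition alg_open :: "'a::real_vector set \<Rightarrow> bool" where
  "alg_open V \<longleftrightarrow> core V = V"

end

theory Submission
  imports Defs "HOL-Library.Function_Algebras"
begin

instantiation "fun" :: (type, real_vector) real_vector
begin

definition scaleR_fun :: "real \<Rightarrow> ('a \<Rightarrow> 'b) \<Rightarrow> 'a \<Rightarrow> 'b" where
  "scaleR_fun r f = (\<lambda>x. r *\<^sub>R f x)"

instance
  by standard (auto simp: scaleR_fun_def fun_eq_iff scaleR_add_right scaleR_add_left)

end

lemma scaleR_fun_apply [simp]: "(r *\<^sub>R f) x = r *\<^sub>R f x"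
  by (simp add: scaleR_fun_def)

lemma dual_space_linear: "f \<in> dual_space tau \<Longrightarrow> linear f"
  by (simp add: dual_space_def)

lemma dual_space_lincomb:
  assumes "f \<in> dual_space tau" "g \<in> dual_space tau"
  shows "(\<lambda>u. a * f u + b * g u) \<in> dual_space tau"
proof -
  have lf: "linear f" and lg: "linear g"
    using assms by (auto simp: dual_space_def)
  have "linear (\<lambda>u. a * f u + b * g u)"
    by (rule linearI) (auto simp: linear_add[OF lf] linear_add[OF lg] linear_scale[OF lf]
        linear_scale[OF lg] algebra_simps)
  moreover have "continuous_map tau euclideanreal (\<lambda>u. a * f u + b * g u)"
    using assms by (auto simp: dual_space_def intro!: continuous_map_add continuous_map_real_mult_left)
  ultimately show ?thesis
    by (simp add: dual_space_def)
qed

lemma dual_space_add: "f \<in> dual_space tau \<Longrightarrow> g \<in> dual_space tau \<Longrightarrow> f + g \<in> dual_space tau"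
  using dual_space_lincomb[of f tau g 1 1] by (simp add: plus_fun_def)

lemma dual_space_scaleR: "f \<in> dual_space tau \<Longrightarrow> c *\<^sub>R f \<in> dual_space tau"
  using dual_space_lincomb[of f tau f c 0] by (simp add: scaleR_fun_def)

lemma zero_in_dual_space: "0 \<in> dual_space tau"
  by (simp add: dual_space_def linear_zero zero_fun_def)

lemma subspace_dual_space: "subspace (dual_space tau)"
  by (simp add: subspace_def zero_in_dual_space dual_space_add dual_space_scaleR)

lemma subspace_Z3: "subspace (UNIV \<times> dual_space tau \<times> (UNIV :: real set))"
  by (intro subspace_Times subspace_UNIV subspace_dual_space)

lemma cpl_finite [simp]: "cpl z \<noteq> \<infinity>" "cpl z \<noteq> -\<infinity>"
  by (auto simp: cpl_def)

lemma cpl_segment: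
  assumes "f \<in> dual_space tau" "g \<in> dual_space tau"
  shows "cpl (t *\<^sub>R x + (1 - t) *\<^sub>R y, \<lambda>u. t * f u + (1 - t) * g u)
    = ereal (t * t * f x + t * (1 - t) * (f y + g x) + (1 - t) * (1 - t) * g y)"
proof -
  have lf: "linear f" and lg: "linear g"
    using assms by (auto simp: dual_space_def)
  have ef: "f (t *\<^sub>R x + (1 - t) *\<^sub>R y) = t * f x + (1 - t) * f y"
    and eg: "g (t *\<^sub>R x + (1 - t) *\<^sub>R y) = t * g x + (1 - t) * g y"
    by (simp_all only: linear_add[OF lf] linear_scale[OF lf] linear_add[OF lg] linear_scale[OF lg]
        real_scaleR_def)
  show ?thesis
    unfolding cpl_def fst_conv snd_conv ef eg by (simp add: algebra_simps)
qed

subsection \<open>Tangent inequality at a contact point\<close>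

lemma real_le_of_le_plus_small_multiple:
  fixes a b k e :: real
  assumes "e > 0" "\<And>t. 0 < t \<Longrightarrow> t \<le> e \<Longrightarrow> a \<le> b + t * k"
  shows "a \<le> b"
proof (rule ccontr)
  assume "\<not> a \<le> b"
  define t where "t = min e ((a - b) / (2 * (\<bar>k\<bar> + 1)))"
  have t: "0 < t" "t \<le> e"
    using assms(1) \<open>\<not> a \<le> b\<close> by (auto simp: t_def)
  have "t \<le> (a - b) / (2 * (\<bar>k\<bar> + 1))"
    by (simp add: t_def)
  then have "2 * (t * \<bar>k\<bar>) + 2 * t \<le> a - b"
    by (simp add: le_divide_eq add_pos_nonneg algebra_simps)
  moreover have "t * k \<le> t * \<bar>k\<bar>"
    using t by (simp add: mult_left_mono)
  moreover have "0 \<le> t * \<bar>k\<bar>"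
    using t by simp
  ultimately have "t * k < a - b"
    using t by linarith
  with assms(2)[OF t] show False
    by simp
qed

text \<open>If a convex function \<open>g \<ge> c\<close> near \<open>z\<close> along the segment towards \<open>w\<close> touches \<open>c\<close> at
  \<open>z\<close>, then \<open>g\<close> lies above the tangent of the quadratic form \<open>c\<close> at \<open>z\<close>.\<close>

lemma convex_Z_tangent_ineq:
  assumes g: "convex_Z tau g" and z: "(x, xs) \<in> Zset tau" and w: "(y, ys) \<in> Zset tau"
    and contact: "g (x, xs) \<le> cpl (x, xs)" and "e > 0"
    and above: "\<And>t. 0 < t \<Longrightarrow> t \<le> e \<Longrightarrow>
      cpl (t *\<^sub>R y + (1 - t) *\<^sub>R x, \<lambda>u. t * ys u + (1 - t) * xs u)
        \<le> g (t *\<^sub>R y + (1 - t) *\<^sub>R x, \<lambda>u. t * ys u + (1 - t) * xs u)"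
  shows "ereal (ys x + xs y - xs x) \<le> g (y, ys)"
proof (rule ereal_le_real)
  fix R assume R: "g (y, ys) \<le> ereal R"
  have duals: "ys \<in> dual_space tau" "xs \<in> dual_space tau"
    using z w by (auto simp: Zset_def)
  show "ereal (ys x + xs y - xs x) \<le> ereal R"
  proof (simp, rule real_le_of_le_plus_small_multiple[of "min e 1"])
    fix t :: real assume t: "0 < t" "t \<le> min e 1"
    have "g (t *\<^sub>R y + (1 - t) *\<^sub>R x, \<lambda>u. t * ys u + (1 - t) * xs u) \<le> ereal (t * R + (1 - t) * xs x)"
      using g[unfolded convex_Z_def, rule_format, of y ys x xs R "xs x" t] z w R contact t
      by (simp add: cpl_def)
    with above[of t] t
    have "cpl (t *\<^sub>R y + (1 - t) *\<^sub>R x, \<lambda>u. t * ys u + (1 - t) * xs u) \<le> ereal (t * R + (1 - t) * xs x)"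
      by (meson order_trans min.boundedE)
    then have "t * t * ys y + t * (1 - t) * (ys x + xs y) + (1 - t) * (1 - t) * xs x
        \<le> t * R + (1 - t) * xs x"
      by (simp add: cpl_segment[OF duals])
    then have "t * (ys x + xs y - xs x) \<le> t * (R + t * (ys x + xs y - xs x - ys y))"
      by (simp add: algebra_simps)
    then show "ys x + xs y - xs x \<le> R + t * (ys x + xs y - xs x - ys y)"
      using t by simp
  qed (use \<open>e > 0\<close> in simp)
qed

subsection \<open>The Fitzpatrick function\<close>

lemma fitz_upper: "(u, us) \<in> T \<Longrightarrow> ereal (snd z u + us (fst z) - us u) \<le> fitz T z"
  unfolding fitz_def by (rule Sup_upper) blast

lemma fitz_le_iff: "fitz T z \<le> b \<longleftrightarrow> (\<forall>(u, us) \<in> T. ereal (snd z u + us (fst z) - us u) \<le> b)"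
  unfolding fitz_def Sup_le_iff by blast

lemma fitz_mono: "S \<subseteq> T \<Longrightarrow> fitz S z \<le> fitz T z"
  by (auto simp: fitz_le_iff intro: fitz_upper)

lemma convex_Z_fitz:
  assumes T: "T \<subseteq> UNIV \<times> dual_space tau"
  shows "convex_Z tau (fitz T)"
  unfolding convex_Z_def
proof (intro allI impI, elim conjE)
  fix x f y g r s and t :: real
  assume r: "fitz T (x, f) \<le> ereal r" and s: "fitz T (y, g) \<le> ereal s" and t: "0 \<le> t" "t \<le> 1"
  have "t * f u + (1 - t) * g u + us (t *\<^sub>R x + (1 - t) *\<^sub>R y) - us u \<le> t * r + (1 - t) * s"
    if uT: "(u, us) \<in> T" for u us
  proof -
    have lin: "linear us"
      using T uT dual_space_linear by blast
    have "f u + us x - us u \<le> r" "g u + us y - us u \<le> s"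
      using r s uT by (auto simp: fitz_le_iff)
    then have "t * (f u + us x - us u) + (1 - t) * (g u + us y - us u) \<le> t * r + (1 - t) * s"
      using t by (intro add_mono mult_left_mono) auto
    moreover have "us (t *\<^sub>R x + (1 - t) *\<^sub>R y) = t * us x + (1 - t) * us y"
      by (simp only: linear_add[OF lin] linear_scale[OF lin] real_scaleR_def)
    ultimately show ?thesis
      by (simp add: algebra_simps)
  qed
  then show "fitz T (t *\<^sub>R x + (1 - t) *\<^sub>R y, \<lambda>u. t * f u + (1 - t) * g u) \<le> ereal (t * r + (1 - t) * s)"
    by (auto simp: fitz_le_iff)
qed

lemma topspace_Ztop: "lcs tau \<Longrightarrow> topspace (Ztop tau) = Zset tau"
  by (simp add: Ztop_def Zset_def weak_star_def lcs_def)

lemma continuous_map_weak_star_eval: "continuous_map (weak_star tau) euclideanreal (\<lambda>f. f u)"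
  unfolding weak_star_def
  by (rule continuous_map_from_subtopology)
    (rule continuous_map_product_projection[of u UNIV "\<lambda>_. euclideanreal", simplified])

lemma continuous_map_Ztop_affine:
  assumes "us \<in> dual_space tau"
  shows "continuous_map (Ztop tau) euclideanreal (\<lambda>z. snd z u + us (fst z) - us u)"
proof -
  have "continuous_map (Ztop tau) euclideanreal (\<lambda>z. snd z u)"
    unfolding Ztop_def using continuous_map_compose[OF continuous_map_snd continuous_map_weak_star_eval]
    by (simp add: o_def)
  moreover have "continuous_map tau euclideanreal us"
    using assms by (simp add: dual_space_def)
  from continuous_map_compose[OF continuous_map_fst this, of "weak_star tau"]
  have "continuous_map (Ztop tau) euclideanreal (\<lambda>z. us (fst z))"
    by (simp add: o_def Ztop_def)
  ultimately show ?thesis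
    by (intro continuous_map_diff continuous_map_add) auto
qed

lemma lsc_Z_fitz:
  assumes T: "T \<subseteq> UNIV \<times> dual_space tau"
  shows "lsc_Z tau (fitz T)"
  unfolding lsc_Z_def
proof
  fix r :: real
  let ?Z = "topspace (Ztop tau)"
  have eq: "{z \<in> ?Z. fitz T z \<le> ereal r} = \<Inter> (insert ?Z
      ((\<lambda>(u, us). {z \<in> ?Z. snd z u + us (fst z) - us u \<in> {..r}}) ` T))"
    by (auto simp: fitz_le_iff)
  have "closedin (Ztop tau) {z \<in> ?Z. snd z u + us (fst z) - us u \<in> {..r}}"
    if "(u, us) \<in> T" for u us
    using that T by (intro closedin_continuous_map_preimage[OF continuous_map_Ztop_affine]) auto
  then show "closedin (Ztop tau) {z \<in> ?Z. fitz T z \<le> ereal r}"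
    unfolding eq by (intro closedin_Inter) auto
qed

lemma fitz_eq_cpl_if_monotone:
  assumes "monotone_op M" "z \<in> M"
  shows "fitz M z = cpl z"
proof (rule antisym)
  obtain x xs where z: "z = (x, xs)"
    by fastforce
  have "xs u + us x - us u \<le> xs x" if "(u, us) \<in> M" for u us
    using assms that unfolding monotone_op_def z by force
  then show "fitz M z \<le> cpl z"
    by (auto simp: fitz_le_iff z cpl_def)
  show "cpl z \<le> fitz M z"
    using fitz_upper[of x xs M z] assms by (simp add: z cpl_def)
qed

lemma fitz_ge_cpl_if_maximal_monotone:
  assumes mono: "monotone_op M"
    and maximal: "\<forall>z \<in> Zset tau. monotone_op (insert z M) \<longrightarrow> z \<in> M"
    and "z \<in> Zset tau"
  shows "cpl z \<le> fitz M z"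
proof (rule ccontr)
  assume "\<not> cpl z \<le> fitz M z"
  then have below: "fitz M z < cpl z"
    by simp
  obtain x xs where z: "z = (x, xs)"
    by fastforce
  have "xs u + us x - us u < xs x" if "(u, us) \<in> M" for u us
    using le_less_trans[OF fitz_upper[OF that, of z] below] by (simp add: z cpl_def)
  then have "monotone_op (insert z M)"
    using mono unfolding monotone_op_def z by fastforce
  with maximal \<open>z \<in> Zset tau\<close> have "z \<in> M"
    by blast
  with below fitz_eq_cpl_if_monotone[OF mono] show False
    by simp
qed

lemma maximal_monotone_extension:
  assumes "S \<subseteq> Zset tau" "monotone_op S"
  obtains M where "S \<subseteq> M" "M \<subseteq> Zset tau" "monotone_op M"
    "\<forall>z \<in> Zset tau. monotone_op (insert z M) \<longrightarrow> z \<in> M"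
proof -
  let ?A = "{M. S \<subseteq> M \<and> M \<subseteq> Zset tau \<and> monotone_op M}"
  have "\<exists>M\<in>?A. \<forall>X\<in>?A. M \<subseteq> X \<longrightarrow> X = M"
  proof (rule subset_Zorn_nonempty)
    fix C assume "C \<noteq> {}" and chain: "subset.chain ?A C"
    have "monotone_op (\<Union>C)"
      unfolding monotone_op_def
    proof (intro allI impI, elim conjE)
      fix x f y g assume "(x, f) \<in> \<Union>C" "(y, g) \<in> \<Union>C"
      then obtain X Y where X: "X \<in> C" "(x, f) \<in> X" and Y: "Y \<in> C" "(y, g) \<in> Y"
        by blast
      have "X \<subseteq> Y \<or> Y \<subseteq> X"
        using chain X Y unfolding subset.chain_def by blast
      moreover have "monotone_op X" "monotone_op Y"
        using chain X Y by (auto simp: subset.chain_def)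
      ultimately show "f x - f y - g x + g y \<ge> 0"
        using X Y unfolding monotone_op_def by (meson subsetD)
    qed
    moreover have "S \<subseteq> \<Union>C"
    proof -
      obtain X where "X \<in> C"
        using \<open>C \<noteq> {}\<close> by blast
      with chain show ?thesis
        by (auto simp: subset.chain_def)
    qed
    moreover have "\<Union>C \<subseteq> Zset tau"
      using chain by (auto simp: subset.chain_def)
    ultimately show "\<Union>C \<in> ?A"
      by simp
  qed (use assms in blast)
  then obtain M where M: "M \<in> ?A" and max: "\<forall>X\<in>?A. M \<subseteq> X \<longrightarrow> X = M"
    by blast
  show ?thesis
  proof (rule that)
    show "\<forall>z \<in> Zset tau. monotone_op (insert z M) \<longrightarrow> z \<in> M"
    proof (intro ballI impI)
      fix z assume "z \<in> Zset tau" "monotone_op (insert z M)"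
      with M have "insert z M \<in> ?A"
        by blast
      with max show "z \<in> M"
        by blast
    qed
  qed (use M in auto)
qed

subsection \<open>From identification to representability\<close>

lemma representable_locates_if_identifies:
  assumes T: "T \<subseteq> UNIV \<times> dual_space tau" and VD: "V \<inter> Domain T \<noteq> {}"
    and mono: "M_class (restr T V)" and ident: "V_identifies tau V T"
  shows "V_representable tau V T \<and> V_locates tau V T"
proof
  let ?S = "restr T V"
  have SZ: "?S \<subseteq> Zset tau"
    using T by (auto simp: restr_def Zset_def)
  obtain N where SN: "?S \<subseteq> N" and NZ: "N \<subseteq> Zset tau" and N: "monotone_op N"
    and maximal: "\<forall>z \<in> Zset tau. monotone_op (insert z N) \<longrightarrow> z \<in> N"
    using maximal_monotone_extension[OF SZ] mono by (auto simp: M_class_def)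
  have NT: "N \<subseteq> UNIV \<times> dual_space tau"
    using NZ by (auto simp: Zset_def)
  obtain s0 where "s0 \<in> ?S"
    using mono by (auto simp: M_class_def)
  have ge: "cpl z \<le> fitz N z" if "z \<in> Zset tau" for z
    using fitz_ge_cpl_if_maximal_monotone[OF N maximal that] .
  have "fitz N \<in> R_class tau"
    unfolding R_class_def proper_Z_def
  proof (intro CollectI conjI ballI)
    show "- \<infinity> < fitz N z" if "z \<in> Zset tau" for z
      using ge[OF that] by (auto simp: cpl_def)
    have "s0 \<in> N" "s0 \<in> Zset tau"
      using \<open>s0 \<in> ?S\<close> SN SZ by auto
    moreover have "fitz N s0 < \<infinity>"
      using fitz_eq_cpl_if_monotone[OF N \<open>s0 \<in> N\<close>] by simp
    ultimately show "\<exists>z\<in>Zset tau. fitz N z < \<infinity>"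
      by blast
  qed (use ge convex_Z_fitz[OF NT] lsc_Z_fitz[OF NT] in auto)
  moreover have "{z \<in> Zset tau. fitz N z = cpl z} \<inter> (V \<times> UNIV) = ?S"
  proof (intro equalityI subsetI)
    fix z assume z: "z \<in> {z \<in> Zset tau. fitz N z = cpl z} \<inter> (V \<times> UNIV)"
    then have "fitz ?S z \<le> cpl z"
      using fitz_mono[OF SN, of z] by auto
    with z ident show "z \<in> ?S"
      by (auto simp: V_identifies_def restr_def)
  qed (use SZ SN fitz_eq_cpl_if_monotone[OF N] in \<open>auto simp: restr_def\<close>)
  ultimately show "V_representable tau V T"
    using VD unfolding V_representable_def by blast
  show "V_locates tau V T"
    using ident unfolding V_locates_def V_identifies_def by force
qed

lemma NI_if_locates:
  assumes "V_locates tau V T"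
  shows "V_NI tau V T"
  unfolding V_NI_def
proof (intro ballI impI)
  fix z assume z: "z \<in> Zset tau" "fst z \<in> V"
  show "cpl z \<le> fitz (restr T V) z"
  proof (rule ccontr)
    assume "\<not> cpl z \<le> fitz (restr T V) z"
    with assms z obtain us where "(fst z, us) \<in> restr T V"
      unfolding V_locates_def restr_def by force
    from fitz_upper[OF this, of z] \<open>\<not> cpl z \<le> fitz (restr T V) z\<close> show False
      by (simp add: cpl_def)
  qed
qed

subsection \<open>Algebraic Hahn--Banach separation\<close>

lemma subset_chain_Union_pair:
  assumes "subset.chain A C" "p \<in> \<Union>C" "q \<in> \<Union>C"
  obtains W where "W \<in> C" "p \<in> W" "q \<in> W"
proof -
  obtain X Y where "X \<in> C" "p \<in> X" "Y \<in> C" "q \<in> Y"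
    using assms(2,3) by blast
  moreover have "X \<subseteq> Y \<or> Y \<subseteq> X"
    using assms(1) \<open>X \<in> C\<close> \<open>Y \<in> C\<close> unfolding subset_chain_def by blast
  ultimately show ?thesis
    using that by blast
qed

text \<open>The graph \<open>G\<close> of a linear functional defined on a subspace of \<open>L\<close>, taking the value \<open>1\<close>
  at \<open>v0\<close> and bounded by \<open>1\<close> on \<open>K\<close>.\<close>

definition hb_partial :: "'v::real_vector set \<Rightarrow> 'v set \<Rightarrow> 'v \<Rightarrow> ('v \<times> real) set \<Rightarrow> bool" where
  "hb_partial L K v0 G \<longleftrightarrow> subspace G \<and> G \<subseteq> L \<times> UNIV \<and> single_valued G \<and> (v0, 1) \<in> G
     \<and> (\<forall>(x, y) \<in> G. x \<in> K \<longrightarrow> y \<le> 1)"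

lemma hb_partial_Union_chain:
  assumes "subset.chain {G. hb_partial L K v0 G} C" "C \<noteq> {}"
  shows "hb_partial L K v0 (\<Union>C)"
proof -
  have C: "hb_partial L K v0 G" if "G \<in> C" for G
    using assms(1) that by (auto simp: subset_chain_def)
  have "subspace (\<Union>C)"
    unfolding subspace_def
  proof (intro conjI ballI allI)
    show "0 \<in> \<Union>C"
      using assms(2) C by (auto simp: hb_partial_def subspace_0)
    show "p + q \<in> \<Union>C" if "p \<in> \<Union>C" "q \<in> \<Union>C" for p q
      using subset_chain_Union_pair[OF assms(1) that] C by (metis UnionI hb_partial_def subspace_add)
    show "c *\<^sub>R p \<in> \<Union>C" if "p \<in> \<Union>C" for c p
      using that C by (meson UnionE UnionI hb_partial_def subspace_scale)
  qed
  moreover have "single_valued (\<Union>C)"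
    unfolding single_valued_def
  proof (intro allI impI)
    fix x y z assume "(x, y) \<in> \<Union>C" "(x, z) \<in> \<Union>C"
    with subset_chain_Union_pair[OF assms(1) this] C show "y = z"
      by (metis hb_partial_def single_valued_def)
  qed
  ultimately show ?thesis
    using assms(2) C by (fastforce simp: hb_partial_def)
qed

lemma hb_partial_extension_value:
  assumes G: "hb_partial L K v0 G" and K: "convex K"
    and absorbing: "\<exists>e>0. e *\<^sub>R w \<in> K" "\<exists>e>0. e *\<^sub>R (- w) \<in> K"
  obtains \<alpha> where "\<And>x y t. (x, y) \<in> G \<Longrightarrow> t > 0 \<Longrightarrow> x + t *\<^sub>R w \<in> K \<Longrightarrow> y + t * \<alpha> \<le> 1"
    and "\<And>x y s. (x, y) \<in> G \<Longrightarrow> s > 0 \<Longrightarrow> x - s *\<^sub>R w \<in> K \<Longrightarrow> y - s * \<alpha> \<le> 1"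
proof -
  have sub: "subspace G" and bound: "\<And>x y. (x, y) \<in> G \<Longrightarrow> x \<in> K \<Longrightarrow> y \<le> 1"
    using G by (auto simp: hb_partial_def)
  define LB where "LB = {(y - 1) / s | x y s. (x, y) \<in> G \<and> s > 0 \<and> x - s *\<^sub>R w \<in> K}"
  define UB where "UB = {(1 - y) / t | x y t. (x, y) \<in> G \<and> t > 0 \<and> x + t *\<^sub>R w \<in> K}"
  have LB_le_UB: "(y1 - 1) / s \<le> (1 - y2) / t"
    if 1: "(x1, y1) \<in> G" "s > 0" "x1 - s *\<^sub>R w \<in> K" and 2: "(x2, y2) \<in> G" "t > 0" "x2 + t *\<^sub>R w \<in> K"
    for x1 y1 s x2 y2 t
  proof -
    let ?a = "t / (s + t)" and ?b = "s / (s + t)"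
    have "?a *\<^sub>R (x1 - s *\<^sub>R w) + ?b *\<^sub>R (x2 + t *\<^sub>R w) \<in> K"
      using 1 2 by (intro convexD[OF K]) (auto simp: add_divide_distrib[symmetric])
    moreover have "?a *\<^sub>R (s *\<^sub>R w) = ?b *\<^sub>R (t *\<^sub>R w)"
      by (simp add: field_simps)
    ultimately have "?a *\<^sub>R x1 + ?b *\<^sub>R x2 \<in> K"
      by (simp add: algebra_simps)
    moreover have "(?a *\<^sub>R x1 + ?b *\<^sub>R x2, ?a * y1 + ?b * y2) \<in> G"
      using subspace_add[OF sub subspace_scale[OF sub 1(1)] subspace_scale[OF sub 2(1)], of ?a ?b]
      by simp
    ultimately have "?a * y1 + ?b * y2 \<le> 1"
      by (rule bound[rotated])
    then have "t * (y1 - 1) \<le> s * (1 - y2)"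
      using 1(2) 2(2) by (simp add: add_divide_distrib[symmetric] divide_le_eq algebra_simps)
    then show ?thesis
      using 1(2) 2(2) by (simp add: field_simps)
  qed
  have zero: "(0, 0) \<in> G"
    using subspace_0[OF sub] by (simp add: zero_prod_def)
  obtain e1 e2 where "e1 > 0" "e1 *\<^sub>R (- w) \<in> K" "e2 > 0" "e2 *\<^sub>R w \<in> K"
    using absorbing by blast
  then have "(0 - 1) / e1 \<in> LB" "(1 - 0) / e2 \<in> UB"
    using zero unfolding LB_def UB_def by force+
  then have "LB \<noteq> {}" "bdd_above LB" "\<forall>l\<in>LB. \<forall>u\<in>UB. l \<le> u"
    using LB_le_UB unfolding bdd_above_def LB_def UB_def by blast+
  show ?thesis
  proof (rule that[of "Sup LB"])
    fix x y t assume "(x, y) \<in> G" "t > 0" "x + t *\<^sub>R w \<in> K"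
    then have "(1 - y) / t \<in> UB"
      unfolding UB_def by blast
    then have "Sup LB \<le> (1 - y) / t"
      using \<open>LB \<noteq> {}\<close> \<open>\<forall>l\<in>LB. \<forall>u\<in>UB. l \<le> u\<close> by (intro cSup_least) auto
    then show "y + t * Sup LB \<le> 1"
      using \<open>t > 0\<close> by (simp add: le_divide_eq algebra_simps)
  next
    fix x y s assume "(x, y) \<in> G" "s > 0" "x - s *\<^sub>R w \<in> K"
    then have "(y - 1) / s \<le> Sup LB"
      using \<open>bdd_above LB\<close> unfolding LB_def by (intro cSup_upper) blast+
    then show "y - s * Sup LB \<le> 1"
      using \<open>s > 0\<close> by (simp add: divide_le_eq algebra_simps)
  qed
qed

lemma hb_partial_extend:
  assumes G: "hb_partial L K v0 G" and L: "subspace L" and K: "convex K"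
    and absorbing: "\<And>d. d \<in> L \<Longrightarrow> \<exists>e>0. e *\<^sub>R d \<in> K"
    and w: "w \<in> L" "w \<notin> Domain G"
  shows "\<exists>G'. hb_partial L K v0 G' \<and> G \<subset> G'"
proof -
  have sub: "subspace G" and GL: "G \<subseteq> L \<times> UNIV" and sv: "single_valued G" and "(v0, 1) \<in> G"
    and bound: "\<And>x y. (x, y) \<in> G \<Longrightarrow> x \<in> K \<Longrightarrow> y \<le> 1"
    using G by (auto simp: hb_partial_def)
  obtain \<alpha> where up: "\<And>x y t. (x, y) \<in> G \<Longrightarrow> t > 0 \<Longrightarrow> x + t *\<^sub>R w \<in> K \<Longrightarrow> y + t * \<alpha> \<le> 1"
    and down: "\<And>x y s. (x, y) \<in> G \<Longrightarrow> s > 0 \<Longrightarrow> x - s *\<^sub>R w \<in> K \<Longrightarrow> y - s * \<alpha> \<le> 1"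
    using hb_partial_extension_value[OF G K absorbing[OF w(1)] absorbing[OF subspace_neg[OF L w(1)]]]
    by blast
  define G' where "G' = span (insert (w, \<alpha>) G)"
  have G': "(x, y) \<in> G' \<longleftrightarrow> (\<exists>t. (x - t *\<^sub>R w, y - t * \<alpha>) \<in> G)" for x y
    unfolding G'_def span_breakdown_eq span_eq_iff[THEN iffD2, OF sub] by simp
  have no_w: "t = t'" if "(x - t *\<^sub>R w, y) \<in> G" "(x - t' *\<^sub>R w, y') \<in> G" for x y y' t t'
  proof (rule ccontr)
    assume "t \<noteq> t'"
    have "(1 / (t - t')) *\<^sub>R ((x - t' *\<^sub>R w, y') - (x - t *\<^sub>R w, y)) \<in> G"
      using that by (intro subspace_scale[OF sub] subspace_diff[OF sub])
    moreover have "x - t' *\<^sub>R w - (x - t *\<^sub>R w) = (t - t') *\<^sub>R w"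
      by (simp add: algebra_simps)
    then have "(1 / (t - t')) *\<^sub>R (x - t' *\<^sub>R w - (x - t *\<^sub>R w)) = w"
      using \<open>t \<noteq> t'\<close> by simp
    ultimately have "(w, (1 / (t - t')) * (y' - y)) \<in> G"
      by simp
    with w(2) show False
      by blast
  qed
  have "hb_partial L K v0 G'"
    unfolding hb_partial_def
  proof (intro conjI)
    show "subspace G'"
      by (simp add: G'_def)
    show "G' \<subseteq> L \<times> UNIV"
    proof
      fix p assume "p \<in> G'"
      then obtain t where "(fst p - t *\<^sub>R w, snd p - t * \<alpha>) \<in> G"
        by (metis G' prod.collapse)
      then have "(fst p - t *\<^sub>R w) + t *\<^sub>R w \<in> L"
        using GL by (intro subspace_add[OF L] subspace_scale[OF L w(1)]) auto
      then show "p \<in> L \<times> UNIV"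
        by (simp add: mem_Times_iff)
    qed
    show "single_valued G'"
      unfolding single_valued_def
    proof (intro allI impI)
      fix x y z assume "(x, y) \<in> G'" "(x, z) \<in> G'"
      then obtain t t' where t: "(x - t *\<^sub>R w, y - t * \<alpha>) \<in> G" "(x - t' *\<^sub>R w, z - t' * \<alpha>) \<in> G"
        by (auto simp: G')
      with no_w have "t = t'"
        by blast
      with t sv show "y = z"
        unfolding single_valued_def by fastforce
    qed
    show "(v0, 1) \<in> G'"
      using \<open>(v0, 1) \<in> G\<close> by (auto simp: G'_def span_base)
    show "\<forall>(x, y) \<in> G'. x \<in> K \<longrightarrow> y \<le> 1"
    proof (clarify)
      fix x y assume "(x, y) \<in> G'" "x \<in> K"
      then obtain t where t: "(x - t *\<^sub>R w, y - t * \<alpha>) \<in> G"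
        by (auto simp: G')
      consider "t = 0" | "t > 0" | "t < 0"
        by linarith
      then show "y \<le> 1"
      proof cases
        case 1
        then show ?thesis using bound t \<open>x \<in> K\<close> by simp
      next
        case 2
        then show ?thesis using up[OF t 2] \<open>x \<in> K\<close> by simp
      next
        case 3
        then show ?thesis using down[OF t, of "- t"] \<open>x \<in> K\<close> by simp
      qed
    qed
  qed
  moreover have "G \<subseteq> G'" "(w, \<alpha>) \<in> G'" "(w, \<alpha>) \<notin> G"
    using w(2) by (auto simp: G'_def span_superset[THEN subset_trans] span_base)
  then have "G \<subset> G'"
    by blast
  ultimately show ?thesis
    by blast
qed

lemma hahn_banach_absorbing:
  assumes L: "subspace L" and K: "convex K" "0 \<in> K"
    and absorbing: "\<And>d. d \<in> L \<Longrightarrow> \<exists>e>0. e *\<^sub>R d \<in> K"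
    and v0: "v0 \<in> L" "v0 \<notin> K"
  obtains F where "\<And>x y. x \<in> L \<Longrightarrow> y \<in> L \<Longrightarrow> F (x + y) = F x + F y"
    and "\<And>c x. x \<in> L \<Longrightarrow> F (c *\<^sub>R x) = c * F x"
    and "F v0 = 1" and "\<And>k. k \<in> K \<Longrightarrow> k \<in> L \<Longrightarrow> F k \<le> 1"
proof -
  let ?A = "{G. hb_partial L K v0 G}"
  have "v0 \<noteq> 0"
    using v0 K by auto
  have G0: "hb_partial L K v0 (span {(v0, 1)})"
    unfolding hb_partial_def span_singleton
  proof (intro conjI)
    show "subspace (range (\<lambda>c. c *\<^sub>R (v0, 1::real)))"
      by (metis span_singleton subspace_span)
    show "range (\<lambda>c. c *\<^sub>R (v0, 1::real)) \<subseteq> L \<times> UNIV"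
      using subspace_scale[OF L v0(1)] by auto
    show "single_valued (range (\<lambda>c. c *\<^sub>R (v0, 1::real)))"
      using \<open>v0 \<noteq> 0\<close> by (auto simp: single_valued_def)
    show "(v0, 1) \<in> range (\<lambda>c. c *\<^sub>R (v0, 1::real))"
      by (auto intro: range_eqI[of _ _ 1])
    show "\<forall>(x, y) \<in> range (\<lambda>c. c *\<^sub>R (v0, 1::real)). x \<in> K \<longrightarrow> y \<le> 1"
    proof (clarsimp)
      fix c assume "c *\<^sub>R v0 \<in> K"
      show "c \<le> 1"
      proof (rule ccontr)
        assume "\<not> c \<le> 1"
        then have "(1 / c) *\<^sub>R (c *\<^sub>R v0) + (1 - 1 / c) *\<^sub>R 0 \<in> K"
          using \<open>c *\<^sub>R v0 \<in> K\<close> K by (intro convexD) auto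
        with \<open>\<not> c \<le> 1\<close> v0(2) show False
          by simp
      qed
    qed
  qed
  have "\<exists>G\<in>?A. \<forall>X\<in>?A. G \<subseteq> X \<longrightarrow> X = G"
    by (rule subset_Zorn_nonempty) (use G0 hb_partial_Union_chain in auto)
  then obtain G where G: "hb_partial L K v0 G" and max: "\<forall>X\<in>?A. G \<subseteq> X \<longrightarrow> X = G"
    by blast
  have sub: "subspace G" and sv: "single_valued G" and "(v0, 1) \<in> G"
    and bound: "\<And>x y. (x, y) \<in> G \<Longrightarrow> x \<in> K \<Longrightarrow> y \<le> 1"
    using G by (auto simp: hb_partial_def)
  have "L \<subseteq> Domain G"
  proof
    fix w assume "w \<in> L"
    show "w \<in> Domain G"
    proof (rule ccontr)
      assume "w \<notin> Domain G"
      then obtain G' where "hb_partial L K v0 G'" "G \<subset> G'"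
        using hb_partial_extend[OF G L K(1) absorbing \<open>w \<in> L\<close>] by blast
      with max show False
        by blast
    qed
  qed
  define F where "F x = (THE y. (x, y) \<in> G)" for x
  have F_eq: "F x = y" if "(x, y) \<in> G" for x y
    unfolding F_def using sv that by (auto simp: single_valued_def)
  have F_graph: "(x, F x) \<in> G" if "x \<in> L" for x
    using \<open>L \<subseteq> Domain G\<close> that F_eq by blast
  show ?thesis
  proof (rule that)
    show "F (x + y) = F x + F y" if "x \<in> L" "y \<in> L" for x y
      using F_eq subspace_add[OF sub F_graph F_graph] that by simp
    show "F (c *\<^sub>R x) = c * F x" if "x \<in> L" for c x
      using F_eq subspace_scale[OF sub F_graph] that by simp
    show "F v0 = 1"
      using F_eq \<open>(v0, 1) \<in> G\<close> .
    show "F k \<le> 1" if "k \<in> K" "k \<in> L" for k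
      using bound[OF F_graph] that by blast
  qed
qed

lemma convex_separation_core_point:
  assumes L: "subspace L" and "A \<subseteq> L" "B \<subseteq> L" and "convex A" "convex B" "A \<inter> B = {}"
    and "a0 \<in> A" "b0 \<in> B" and core: "\<And>d. d \<in> L \<Longrightarrow> \<exists>e>0. b0 + e *\<^sub>R d \<in> B"
  obtains e F where "e > 0"
    and "\<And>x y. x \<in> L \<Longrightarrow> y \<in> L \<Longrightarrow> F (x + y) = F x + F y"
    and "\<And>c x. x \<in> L \<Longrightarrow> F (c *\<^sub>R x) = c * F x"
    and "\<And>a b. a \<in> A \<Longrightarrow> b \<in> B \<Longrightarrow> F b \<le> F a"
    and "\<And>a. a \<in> A \<Longrightarrow> F b0 + e \<le> F a"
proof -
  define K where "K = (\<lambda>k. k - (b0 - a0)) ` (\<Union>b\<in>B. \<Union>a\<in>A. {b - a})"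
  have K_iff: "k \<in> K \<longleftrightarrow> (\<exists>a\<in>A. \<exists>b\<in>B. k = b - a - (b0 - a0))" for k
    unfolding K_def by blast
  have "convex K"
    unfolding K_def by (intro convex_translation_subtract convex_differences) fact+
  have "0 \<in> K"
    using \<open>a0 \<in> A\<close> \<open>b0 \<in> B\<close> K_iff[of 0] by auto
  have absorbing: "\<exists>e>0. e *\<^sub>R d \<in> K" if d: "d \<in> L" for d
  proof -
    obtain e where "e > 0" "b0 + e *\<^sub>R d \<in> B"
      using core[OF d] by blast
    moreover have "e *\<^sub>R d = (b0 + e *\<^sub>R d) - a0 - (b0 - a0)"
      by simp
    ultimately show ?thesis
      using \<open>a0 \<in> A\<close> K_iff by blast
  qed
  have "a0 - b0 \<notin> K"
  proof
    assume "a0 - b0 \<in> K"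
    then obtain a b where "a \<in> A" "b \<in> B" "a0 - b0 = b - a - (b0 - a0)"
      using K_iff by blast
    then have "a = b"
      by (simp add: algebra_simps)
    with \<open>a \<in> A\<close> \<open>b \<in> B\<close> \<open>A \<inter> B = {}\<close> show False
      by blast
  qed
  have v0: "a0 - b0 \<in> L" "a0 - b0 \<notin> K"
    using \<open>a0 \<in> A\<close> \<open>b0 \<in> B\<close> assms(2,3) subspace_diff[OF L] \<open>a0 - b0 \<notin> K\<close> by auto
  obtain F where add: "\<And>x y. x \<in> L \<Longrightarrow> y \<in> L \<Longrightarrow> F (x + y) = F x + F y"
    and scale: "\<And>c x. x \<in> L \<Longrightarrow> F (c *\<^sub>R x) = c * F x"
    and "F (a0 - b0) = 1" and bound: "\<And>k. k \<in> K \<Longrightarrow> k \<in> L \<Longrightarrow> F k \<le> 1"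
    using hahn_banach_absorbing[OF L \<open>convex K\<close> \<open>0 \<in> K\<close> absorbing v0] by blast
  have diff: "F (x - y) = F x - F y" if "x \<in> L" "y \<in> L" for x y
    using add[OF that(1) subspace_scale[OF L that(2)], of "-1"] scale[OF that(2), of "-1"] by simp
  have "a0 \<in> L" "b0 \<in> L"
    using \<open>a0 \<in> A\<close> \<open>b0 \<in> B\<close> assms(2,3) by auto
  then have "F a0 - F b0 = 1"
    using \<open>F (a0 - b0) = 1\<close> diff by simp
  obtain e where "e > 0" and e: "b0 + e *\<^sub>R (a0 - b0) \<in> B"
    using core[OF v0(1)] by blast
  show ?thesis
  proof (rule that[OF \<open>e > 0\<close> add scale])
    show le: "F b \<le> F a" if "a \<in> A" "b \<in> B" for a b
    proof -
      have "b - a - (b0 - a0) \<in> K"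
        using that K_iff by blast
      moreover have "a \<in> L" "b \<in> L" "a0 \<in> L" "b0 \<in> L"
        using that \<open>a0 \<in> A\<close> \<open>b0 \<in> B\<close> assms(2,3) by auto
      ultimately show ?thesis
        using bound[of "b - a - (b0 - a0)"] \<open>F a0 - F b0 = 1\<close> by (simp add: diff subspace_diff[OF L])
    qed
    have "F (b0 + e *\<^sub>R (a0 - b0)) = F b0 + e"
      using add[OF _ subspace_scale[OF L v0(1)], of b0 e] scale[OF v0(1), of e] \<open>b0 \<in> B\<close> assms(3)
        \<open>F (a0 - b0) = 1\<close> by auto
    then show "F b0 + e \<le> F a" if "a \<in> A" for a
      using le[OF that e] by simp
  qed (assumption+)
qed

subsection \<open>Locally convex spaces and the weak-star topology\<close>

lemma continuous_map_lcs_add_const: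
  assumes "lcs tau"
  shows "continuous_map tau tau (\<lambda>x. x + v)"
proof -
  have pair: "continuous_map tau (prod_topology tau tau) (\<lambda>x. (x, v))"
    using assms by (intro continuous_map_pairedI) (auto simp: lcs_def)
  have add: "continuous_map (prod_topology tau tau) tau (\<lambda>(x, y). x + y)"
    using assms by (simp add: lcs_def)
  from continuous_map_compose[OF pair add] show ?thesis
    by (simp add: o_def)
qed

lemma continuous_map_lcs_scaleR:
  assumes "lcs tau"
  shows "continuous_map tau tau (\<lambda>x. c *\<^sub>R x)"
proof -
  have pair: "continuous_map tau (prod_topology euclideanreal tau) (\<lambda>x. (c, x))"
    by (intro continuous_map_pairedI) auto
  have mult: "continuous_map (prod_topology euclideanreal tau) tau (\<lambda>(a, x). a *\<^sub>R x)"
    using assms by (simp add: lcs_def)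
  from continuous_map_compose[OF pair mult] show ?thesis
    by (simp add: o_def)
qed

lemma openin_lcs_affine_preimage:
  assumes "lcs tau" "openin tau C" "c \<noteq> 0"
  shows "openin tau {x. c *\<^sub>R (x - v) \<in> C}"
proof -
  from continuous_map_compose[OF continuous_map_lcs_add_const[OF assms(1), of "- v"]
      continuous_map_lcs_scaleR[OF assms(1), of c]]
  have "continuous_map tau tau (\<lambda>x. c *\<^sub>R (x - v))"
    by (simp add: o_def)
  from openin_continuous_map_preimage[OF this assms(2)] assms(1) show ?thesis
    by (simp add: lcs_def)
qed

lemma lcs_nbhd_absorbing:
  assumes "lcs tau" "openin tau C" "0 \<in> C"
  shows "\<exists>e>0. \<forall>t. \<bar>t\<bar> < e \<longrightarrow> t *\<^sub>R d \<in> C"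
proof -
  have pair: "continuous_map euclideanreal (prod_topology euclideanreal tau) (\<lambda>t. (t, d))"
    using assms by (intro continuous_map_pairedI) (auto simp: lcs_def)
  have mult: "continuous_map (prod_topology euclideanreal tau) tau (\<lambda>(a, x). a *\<^sub>R x)"
    using assms by (simp add: lcs_def)
  from continuous_map_compose[OF pair mult]
  have "continuous_map euclideanreal tau (\<lambda>t. t *\<^sub>R d)"
    by (simp add: o_def)
  from openin_continuous_map_preimage[OF this assms(2)]
  have "open {t. t *\<^sub>R d \<in> C}"
    by simp
  moreover have "0 \<in> {t. t *\<^sub>R d \<in> C}"
    using assms(3) by simp
  ultimately obtain e where "e > 0" "ball 0 e \<subseteq> {t. t *\<^sub>R d \<in> C}"
    by (meson open_contains_ball)
  then show ?thesis
    by (intro exI[of _ e]) (auto simp: dist_real_def)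
qed

lemma lcs_convex_nbhd:
  assumes "lcs tau" "openin tau U" "x0 \<in> U"
  obtains C where "openin tau C" "convex C" "0 \<in> C" "\<And>c. c \<in> C \<Longrightarrow> x0 + c \<in> U"
proof -
  have "openin tau {x \<in> topspace tau. x + x0 \<in> U}"
    using openin_continuous_map_preimage[OF continuous_map_lcs_add_const] assms by blast
  moreover have "0 \<in> {x \<in> topspace tau. x + x0 \<in> U}"
    using assms by (simp add: lcs_def)
  ultimately obtain C where "openin tau C" "convex C" "0 \<in> C" "C \<subseteq> {x \<in> topspace tau. x + x0 \<in> U}"
    using assms(1) unfolding lcs_def by blast
  then show ?thesis
    using that by (auto simp: add.commute)
qed

lemma linear_sublevel_openin:
  fixes f :: "'a::real_vector \<Rightarrow> real"
  assumes lcs: "lcs tau" and f: "linear f" and C: "openin tau C" "0 \<in> C"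
    and bounded: "\<And>c. c \<in> C \<Longrightarrow> f c \<le> M"
  shows "openin tau {x \<in> topspace tau. f x < a}"
proof (subst openin_subopen, intro ballI)
  fix x1 assume "x1 \<in> {x \<in> topspace tau. f x < a}"
  then have "f x1 < a"
    by simp
  define M' where "M' = max M 0 + 1"
  define t where "t = (a - f x1) / M'"
  have "M' > 0" "M < M'" "t > 0"
    using \<open>f x1 < a\<close> by (auto simp: M'_def t_def)
  let ?N = "{x. (1 / t) *\<^sub>R (x - x1) \<in> C}"
  have "f x < a" if "x \<in> ?N" for x
  proof -
    have "f x = f x1 + t * f ((1 / t) *\<^sub>R (x - x1))"
      using \<open>t > 0\<close> by (simp add: linear_diff[OF f] linear_scale[OF f])
    also have "\<dots> < f x1 + t * M'"
      using bounded[OF that[simplified]] \<open>M < M'\<close> \<open>t > 0\<close> by simp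
    also have "\<dots> = a"
      using \<open>M' > 0\<close> by (simp add: t_def)
    finally show ?thesis .
  qed
  moreover have "openin tau ?N" "x1 \<in> ?N"
    using openin_lcs_affine_preimage[OF lcs C(1)] \<open>t > 0\<close> C(2) by auto
  ultimately show "\<exists>N. openin tau N \<and> x1 \<in> N \<and> N \<subseteq> {x \<in> topspace tau. f x < a}"
    using lcs by (auto simp: lcs_def)
qed

lemma continuous_map_linear_bounded_above:
  fixes f :: "'a::real_vector \<Rightarrow> real"
  assumes lcs: "lcs tau" and f: "linear f" and C: "openin tau C" "0 \<in> C"
    and bounded: "\<And>c. c \<in> C \<Longrightarrow> f c \<le> M"
  shows "continuous_map tau euclideanreal f"
proof -
  have "openin tau {x. - x \<in> C}"
    using openin_lcs_affine_preimage[OF lcs C(1), of "-1" 0] by simp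
  moreover have "- f c \<le> M" if "c \<in> {x. - x \<in> C}" for c
    using bounded that linear_neg[OF f] by fastforce
  ultimately have neg: "openin tau {x \<in> topspace tau. - f x < b}" for b
    using linear_sublevel_openin[OF lcs linear_compose_neg[OF f], of "{x. - x \<in> C}" M] C(2)
    by simp
  have "openin tau {x \<in> topspace tau. f x > a}" for a
    using neg[of "- a"] by simp
  with linear_sublevel_openin[OF assms] show ?thesis
    by (simp add: continuous_map_upper_lower_semicontinuous_lt)
qed

lemma weak_star_nbhd_contains_basic:
  assumes "openin (weak_star tau) W" "xs0 \<in> W"
  obtains F0 \<delta> where "finite F0" "\<delta> > 0" "{g \<in> dual_space tau. \<forall>y\<in>F0. \<bar>g y - xs0 y\<bar> < \<delta>} \<subseteq> W"
proof -
  obtain Wp where Wp: "openin (product_topology (\<lambda>_. euclideanreal) UNIV) Wp" "W = Wp \<inter> dual_space tau"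
    using assms(1) unfolding weak_star_def openin_subtopology by blast
  then obtain U where "finite {y. U y \<noteq> UNIV}" and U: "\<And>y. open (U y)"
    and "xs0 \<in> Pi\<^sub>E UNIV U" "Pi\<^sub>E UNIV U \<subseteq> Wp"
    using assms(2) unfolding openin_product_topology_alt by force
  define F0 where "F0 = {y. U y \<noteq> UNIV}"
  have "\<exists>d>0. ball (xs0 y) d \<subseteq> U y" for y
    using U \<open>xs0 \<in> Pi\<^sub>E UNIV U\<close> open_contains_ball by blast
  then obtain d where d: "\<And>y. d y > 0" "\<And>y. ball (xs0 y) (d y) \<subseteq> U y"
    by metis
  define \<delta> where "\<delta> = Min (insert 1 (d ` F0))"
  have "finite F0"
    using \<open>finite {y. U y \<noteq> UNIV}\<close> by (simp add: F0_def)
  then have "\<delta> > 0" "\<And>y. y \<in> F0 \<Longrightarrow> \<delta> \<le> d y"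
    using d(1) by (auto simp: \<delta>_def)
  have "g \<in> W" if g: "g \<in> dual_space tau" "\<forall>y\<in>F0. \<bar>g y - xs0 y\<bar> < \<delta>" for g
  proof -
    have "g y \<in> U y" for y
    proof (cases "y \<in> F0")
      case True
      with g \<open>\<And>y. y \<in> F0 \<Longrightarrow> \<delta> \<le> d y\<close> have "g y \<in> ball (xs0 y) (d y)"
        by (fastforce simp: dist_real_def abs_minus_commute)
      with d(2) show ?thesis
        by blast
    qed (simp add: F0_def)
    with \<open>Pi\<^sub>E UNIV U \<subseteq> Wp\<close> Wp(2) g(1) show ?thesis
      by auto
  qed
  with \<open>finite F0\<close> \<open>\<delta> > 0\<close> show ?thesis
    using that by blast
qed

lemma linear_functional_eq_evaluation:
  fixes g :: "('a::real_vector \<Rightarrow> real) \<Rightarrow> real"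
  assumes "finite F0" and "subspace D" and "\<And>q. q \<in> D \<Longrightarrow> linear q"
    and "\<And>q q'. q \<in> D \<Longrightarrow> q' \<in> D \<Longrightarrow> g (q + q') = g q + g q'"
    and "\<And>c q. q \<in> D \<Longrightarrow> g (c *\<^sub>R q) = c * g q"
    and "\<And>q. q \<in> D \<Longrightarrow> \<forall>y\<in>F0. q y = 0 \<Longrightarrow> g q = 0"
  shows "\<exists>y. \<forall>q\<in>D. g q = q y"
  using assms
proof (induction F0 arbitrary: D rule: finite_induct)
  case empty
  then show ?case
    by (intro exI[of _ 0]) (auto simp: linear_0)
next
  case (insert y1 F D)
  let ?D' = "{q \<in> D. q y1 = 0}"
  have "subspace ?D'"
    using insert.prems(1) by (auto simp: subspace_def)
  with insert.prems obtain y' where y': "\<And>q. q \<in> D \<Longrightarrow> q y1 = 0 \<Longrightarrow> g q = q y'"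
    using insert.IH[of ?D'] by auto
  show ?case
  proof (cases "\<exists>q\<in>D. q y1 \<noteq> 0")
    case False
    with y' show ?thesis
      by blast
  next
    case True
    then obtain q0 where "q0 \<in> D" "q0 y1 \<noteq> 0"
      by blast
    define q1 where "q1 = (1 / q0 y1) *\<^sub>R q0"
    have q1: "q1 \<in> D" "q1 y1 = 1"
      using subspace_scale[OF insert.prems(1) \<open>q0 \<in> D\<close>] \<open>q0 y1 \<noteq> 0\<close> by (auto simp: q1_def)
    show ?thesis
    proof (intro exI[of _ "y' + (g q1 - q1 y') *\<^sub>R y1"] ballI)
      fix q assume q: "q \<in> D"
      define r where "r = q + (- q y1) *\<^sub>R q1"
      have "r \<in> D"
        unfolding r_def by (rule subspace_add[OF insert.prems(1) q subspace_scale[OF insert.prems(1) q1(1)]])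
      moreover have "r y1 = 0"
        using q1 by (simp add: r_def)
      ultimately have "g r = r y'"
        using y' by blast
      moreover have "g r = g q - q y1 * g q1"
        unfolding r_def insert.prems(3)[OF q subspace_scale[OF insert.prems(1) q1(1)]]
          insert.prems(4)[OF q1(1)] by simp
      moreover have "r y' = q y' - q y1 * q1 y'"
        by (simp add: r_def)
      ultimately have "g q - q y1 * g q1 = q y' - q y1 * q1 y'"
        by simp
      moreover have "q (y' + (g q1 - q1 y') *\<^sub>R y1) = q y' + (g q1 - q1 y') * q y1"
        using insert.prems(2)[OF q] by (simp only: linear_add linear_scale real_scaleR_def)
      ultimately show "g q = q (y' + (g q1 - q1 y') *\<^sub>R y1)"
        by (simp add: algebra_simps)
    qed
  qed
qed

subsection \<open>Continuous affine minorants on $X \times X^*$\<close>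

lemma lsc_Z_nbhd_above:
  assumes "lcs tau" "lsc_Z tau h" "(x0, xs0) \<in> Zset tau" "ereal r < h (x0, xs0)"
  obtains U W where "openin tau U" "openin (weak_star tau) W" "x0 \<in> U" "xs0 \<in> W"
    and "\<And>x g. x \<in> U \<Longrightarrow> g \<in> W \<Longrightarrow> ereal r < h (x, g)"
proof -
  let ?O = "topspace (Ztop tau) - {z \<in> topspace (Ztop tau). h z \<le> ereal r}"
  have "openin (Ztop tau) ?O"
    using assms(2) unfolding lsc_Z_def by (intro openin_diff openin_topspace) auto
  then have "\<forall>x y. (x, y) \<in> ?O \<longrightarrow> (\<exists>U W. openin tau U \<and> openin (weak_star tau) W
      \<and> x \<in> U \<and> y \<in> W \<and> U \<times> W \<subseteq> ?O)"
    unfolding Ztop_def openin_prod_topology_alt .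
  moreover have "(x0, xs0) \<in> ?O"
    using assms by (auto simp: topspace_Ztop)
  ultimately obtain U W where "openin tau U" "openin (weak_star tau) W" "x0 \<in> U" "xs0 \<in> W"
    and UW: "U \<times> W \<subseteq> ?O"
    by meson
  moreover have "ereal r < h (x, g)" if "x \<in> U" "g \<in> W" for x g
    using UW that by auto
  ultimately show ?thesis
    using that by blast
qed

lemma convex_weak_star_basic_nbhd: "convex {g \<in> dual_space tau. \<forall>y\<in>F0. \<bar>g y - xs0 y\<bar> < \<delta>}"
proof -
  have "linear (\<lambda>g::'a \<Rightarrow> real. g y)" for y :: 'a
    by (simp add: linear_iff)
  then have "convex ((\<lambda>g. g y) -` ball (xs0 y) \<delta>)" for y
    by (intro convex_linear_vimage convex_ball)
  then have "convex (dual_space tau \<inter> (\<Inter>y\<in>F0. (\<lambda>g. g y) -` ball (xs0 y) \<delta>))"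
    by (intro convex_Int[OF subspace_imp_convex[OF subspace_dual_space]] convex_INT)
  moreover have "dual_space tau \<inter> (\<Inter>y\<in>F0. (\<lambda>g. g y) -` ball (xs0 y) \<delta>)
      = {g \<in> dual_space tau. \<forall>y\<in>F0. \<bar>g y - xs0 y\<bar> < \<delta>}"
    by (auto simp: dist_real_def abs_minus_commute)
  ultimately show ?thesis
    by simp
qed

lemma weak_star_basic_nbhd_absorbing:
  fixes dg :: "'a \<Rightarrow> real"
  assumes "finite F0" "\<delta> > 0"
  obtains e where "e > 0" "\<And>t y. 0 \<le> t \<Longrightarrow> t \<le> e \<Longrightarrow> y \<in> F0 \<Longrightarrow> \<bar>t * dg y\<bar> < \<delta>"
proof
  let ?S = "\<Sum>y\<in>F0. \<bar>dg y\<bar>"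
  show "\<delta> / (?S + 1) > 0"
    using \<open>\<delta> > 0\<close> by (simp add: add_nonneg_pos sum_nonneg)
  fix t y assume t: "0 \<le> t" "t \<le> \<delta> / (?S + 1)" and "y \<in> F0"
  have "\<bar>t * dg y\<bar> = t * \<bar>dg y\<bar>"
    using t by (simp add: abs_mult)
  also have "\<dots> \<le> \<delta> / (?S + 1) * ?S"
    using t member_le_sum[OF \<open>y \<in> F0\<close> _ \<open>finite F0\<close>, of "\<lambda>y. \<bar>dg y\<bar>"]
    by (intro mult_mono) auto
  also have "\<dots> < \<delta>"
  proof -
    have "\<delta> / (c + 1) * c < \<delta>" if "0 \<le> c" for c :: real
      using that \<open>\<delta> > 0\<close> by (simp add: field_simps)
    then show ?thesis
      by (simp add: sum_nonneg)
  qed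
  finally show "\<bar>t * dg y\<bar> < \<delta>" .
qed

text \<open>A linear functional on $X \times X^* \times \mathbb{R}$ bounded above on a neighbourhood is the
  sum of a continuous functional on \<open>X\<close>, an evaluation at a point of \<open>X\<close>, and a multiple of the last
  coordinate: the dual of \<open>(X^*, w^*)\<close> is \<open>X\<close>.\<close>

lemma Z_functional_representation:
  fixes F :: "'a::real_vector \<times> ('a \<Rightarrow> real) \<times> real \<Rightarrow> real"
  assumes lcs: "lcs tau"
    and add: "\<And>u v. u \<in> UNIV \<times> dual_space tau \<times> UNIV \<Longrightarrow> v \<in> UNIV \<times> dual_space tau \<times> UNIV \<Longrightarrow>
      F (u + v) = F u + F v"
    and scale: "\<And>c u. u \<in> UNIV \<times> dual_space tau \<times> UNIV \<Longrightarrow> F (c *\<^sub>R u) = c * F u"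
    and C: "openin tau C" "0 \<in> C" and "finite F0" "\<delta> > 0" and xs0: "xs0 \<in> dual_space tau"
    and bounded: "\<And>c g. c \<in> C \<Longrightarrow> g \<in> dual_space tau \<Longrightarrow> \<forall>y\<in>F0. \<bar>g y - xs0 y\<bar> < \<delta> \<Longrightarrow>
      F (x0 + c, g, s0) \<le> M"
  obtains f y where "f \<in> dual_space tau"
    and "\<And>x q s. q \<in> dual_space tau \<Longrightarrow> F (x, q, s) = f x + q y + s * F (0, 0, 1)"
proof -
  define f where "f x = F (x, 0, 0)" for x
  define g where "g q = F (0, q, 0)" for q
  define a where "a = F (0, 0, 1)"
  have zero: "(0 :: 'a \<Rightarrow> real) \<in> dual_space tau"
    by (rule zero_in_dual_space)
  have decomp: "F (x, q, s) = f x + g q + s * a" if "q \<in> dual_space tau" for x q s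
  proof -
    let ?L = "UNIV \<times> dual_space tau \<times> (UNIV :: real set)"
    have mem: "(x, 0, 0) \<in> ?L" "(0, q, 0) \<in> ?L" "(0, 0, 1) \<in> ?L" "s *\<^sub>R (0, 0, 1) \<in> ?L"
      using that zero by auto
    then have "(0, q, 0) + s *\<^sub>R (0, 0, 1) \<in> ?L"
      by (simp add: subspace_add[OF subspace_Z3])
    have "F (x, q, s) = F ((x, 0, 0) + ((0, q, 0) + s *\<^sub>R (0, 0, 1)))"
      by simp
    also have "\<dots> = F (x, 0, 0) + (F (0, q, 0) + F (s *\<^sub>R (0, 0, 1)))"
      using add[OF mem(1) \<open>(0, q, 0) + s *\<^sub>R (0, 0, 1) \<in> ?L\<close>] add[OF mem(2,4)] by simp
    also have "F (s *\<^sub>R (0, 0, 1)) = s * a"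
      unfolding a_def by (rule scale[OF mem(3)])
    finally show ?thesis
      by (simp add: f_def g_def zero_fun_def)
  qed
  have "linear f"
  proof (rule linearI)
    show "f (u + v) = f u + f v" for u v
      using add[of "(u, 0, 0)" "(v, 0, 0)"] zero by (simp add: f_def)
    show "f (c *\<^sub>R u) = c *\<^sub>R f u" for c u
      using scale[of "(u, 0, 0)" c] zero by (simp add: f_def)
  qed
  have g_add: "g (q + q') = g q + g q'" if "q \<in> dual_space tau" "q' \<in> dual_space tau" for q q'
    using add[of "(0, q, 0)" "(0, q', 0)"] that by (simp add: g_def)
  have g_scale: "g (c *\<^sub>R q) = c * g q" if "q \<in> dual_space tau" for c q
    using scale[of "(0, q, 0)" c] that by (simp add: g_def)
  have "continuous_map tau euclideanreal f"
  proof (rule continuous_map_linear_bounded_above[OF lcs \<open>linear f\<close> C])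
    fix c assume "c \<in> C"
    with bounded[of c xs0] xs0 \<open>\<delta> > 0\<close> have "f (x0 + c) + g xs0 + s0 * a \<le> M"
      by (simp add: decomp)
    then show "f c \<le> M - f x0 - g xs0 - s0 * a"
      by (simp add: linear_add[OF \<open>linear f\<close>])
  qed
  with \<open>linear f\<close> have "f \<in> dual_space tau"
    by (simp add: dual_space_def)
  have "g q = 0" if q: "q \<in> dual_space tau" "\<forall>y\<in>F0. q y = 0" for q
  proof (rule ccontr)
    assume "g q \<noteq> 0"
    define t where "t = (\<bar>M - f x0 - g xs0 - s0 * a\<bar> + 1) / g q"
    have "xs0 + t *\<^sub>R q \<in> dual_space tau"
      by (intro dual_space_add dual_space_scaleR xs0 q(1))
    with bounded[OF C(2) this] q(2) \<open>\<delta> > 0\<close> have "f x0 + g (xs0 + t *\<^sub>R q) + s0 * a \<le> M"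
      by (simp add: decomp)
    moreover have "g (xs0 + t *\<^sub>R q) = g xs0 + t * g q"
      using g_add[OF xs0 dual_space_scaleR[OF q(1)]] g_scale[OF q(1)] by simp
    moreover have "t * g q = \<bar>M - f x0 - g xs0 - s0 * a\<bar> + 1"
      using \<open>g q \<noteq> 0\<close> by (simp add: t_def)
    ultimately show False
      by linarith
  qed
  then obtain y where "\<And>q. q \<in> dual_space tau \<Longrightarrow> g q = q y"
    using linear_functional_eq_evaluation[OF \<open>finite F0\<close> subspace_dual_space[of tau] dual_space_linear[of _ tau] g_add g_scale]
    by blast
  with \<open>f \<in> dual_space tau\<close> decomp show ?thesis
    using that by (simp add: a_def)
qed

lemma convex_epigraph_Z:
  assumes "convex_Z tau h"
  shows "convex {(x, q, s). (x, q) \<in> Zset tau \<and> h (x, q) \<le> ereal s}"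
  unfolding convex_alt
proof (clarsimp)
  fix x q s y g t and u :: real
  assume "(x, q) \<in> Zset tau" "h (x, q) \<le> ereal s" "(y, g) \<in> Zset tau" "h (y, g) \<le> ereal t"
    "0 \<le> u" "u \<le> 1"
  moreover have "(1 - u) *\<^sub>R q + u *\<^sub>R g = (\<lambda>v. u * g v + (1 - u) * q v)"
    by (simp add: fun_eq_iff)
  ultimately show "((1 - u) *\<^sub>R x + u *\<^sub>R y, (1 - u) *\<^sub>R q + u *\<^sub>R g) \<in> Zset tau \<and>
      h ((1 - u) *\<^sub>R x + u *\<^sub>R y, (1 - u) *\<^sub>R q + u *\<^sub>R g) \<le> ereal ((1 - u) * s + u * t)"
    using assms[unfolded convex_Z_def, rule_format, of y g x q t s u]
    by (auto simp: Zset_def add.commute dual_space_lincomb)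
qed

lemma box_core_point:
  fixes d :: "'a::real_vector \<times> ('a \<Rightarrow> real) \<times> real"
  assumes lcs: "lcs tau" and C: "openin tau C" "0 \<in> C" and "finite F0" "\<delta> > 0"
    and xs0: "xs0 \<in> dual_space tau" and d: "d \<in> UNIV \<times> dual_space tau \<times> UNIV"
  shows "\<exists>e>0. (x0, xs0, r - 1) + e *\<^sub>R d
    \<in> ((+) x0 ` C) \<times> {g \<in> dual_space tau. \<forall>y\<in>F0. \<bar>g y - xs0 y\<bar> < \<delta>} \<times> {..<r}"
proof -
  obtain dx dg ds where d_eq: "d = (dx, dg, ds)" and dg: "dg \<in> dual_space tau"
    using d by auto
  obtain e1 where "e1 > 0" and e1: "\<And>t. \<bar>t\<bar> < e1 \<Longrightarrow> t *\<^sub>R dx \<in> C"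
    using lcs_nbhd_absorbing[OF lcs C] by blast
  obtain e2 where "e2 > 0" and e2: "\<And>t y. 0 \<le> t \<Longrightarrow> t \<le> e2 \<Longrightarrow> y \<in> F0 \<Longrightarrow> \<bar>t * dg y\<bar> < \<delta>"
    using weak_star_basic_nbhd_absorbing[OF \<open>finite F0\<close> \<open>\<delta> > 0\<close>] by blast
  define e where "e = min (e1 / 2) (min e2 (1 / (\<bar>ds\<bar> + 1)))"
  have e: "e > 0" "\<bar>e\<bar> < e1" "e \<le> e2"
    using \<open>e1 > 0\<close> \<open>e2 > 0\<close> by (auto simp: e_def)
  have "e \<le> 1 / (\<bar>ds\<bar> + 1)"
    by (simp add: e_def)
  then have "e * (\<bar>ds\<bar> + 1) \<le> 1"
    by (simp add: le_divide_eq add_nonneg_pos)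
  then have "e * \<bar>ds\<bar> + e \<le> 1"
    by (simp add: algebra_simps)
  moreover have "e * ds \<le> e * \<bar>ds\<bar>"
    using e(1) by (intro mult_left_mono) auto
  ultimately have "e * ds < 1"
    using e(1) by linarith
  moreover have "xs0 + e *\<^sub>R dg \<in> dual_space tau"
    by (intro dual_space_add dual_space_scaleR xs0 dg)
  ultimately show ?thesis
    using e e1[OF e(2)] e2[OF less_imp_le[OF e(1)] e(3)]
    by (intro exI[of _ e]) (auto simp: d_eq image_iff)
qed

lemma epigraph_box_separation:
  fixes h :: "'a::real_vector \<times> ('a \<Rightarrow> real) \<Rightarrow> ereal"
  assumes lcs: "lcs tau" and cvx: "convex_Z tau h" and lsc: "lsc_Z tau h"
    and za: "(xa, ga) \<in> Zset tau" "h (xa, ga) = ereal ha"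
    and z0: "(x0, xs0) \<in> Zset tau" "ereal r < h (x0, xs0)"
  obtains e C F0 \<delta> F where "e > 0" "openin tau C" "0 \<in> C" "finite F0" "\<delta> > 0"
    and "\<And>u v. u \<in> UNIV \<times> dual_space tau \<times> UNIV \<Longrightarrow> v \<in> UNIV \<times> dual_space tau \<times> UNIV \<Longrightarrow>
      F (u + v) = F u + F v"
    and "\<And>c u. u \<in> UNIV \<times> dual_space tau \<times> UNIV \<Longrightarrow> F (c *\<^sub>R u) = c * F u"
    and "\<And>x q s c g t. (x, q) \<in> Zset tau \<Longrightarrow> h (x, q) \<le> ereal s \<Longrightarrow> c \<in> C \<Longrightarrow> g \<in> dual_space tau
      \<Longrightarrow> \<forall>y\<in>F0. \<bar>g y - xs0 y\<bar> < \<delta> \<Longrightarrow> t < r \<Longrightarrow> F (x0 + c, g, t) \<le> F (x, q, s)"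
    and "\<And>x q s. (x, q) \<in> Zset tau \<Longrightarrow> h (x, q) \<le> ereal s \<Longrightarrow> F (x0, xs0, r - 1) + e \<le> F (x, q, s)"
proof -
  have xs0: "xs0 \<in> dual_space tau"
    using z0(1) by (simp add: Zset_def)
  obtain U W where "openin tau U" "openin (weak_star tau) W" "x0 \<in> U" "xs0 \<in> W"
    and above: "\<And>x g. x \<in> U \<Longrightarrow> g \<in> W \<Longrightarrow> ereal r < h (x, g)"
    using lsc_Z_nbhd_above[OF lcs lsc z0] by blast
  obtain C where C: "openin tau C" "convex C" "0 \<in> C" and CU: "\<And>c. c \<in> C \<Longrightarrow> x0 + c \<in> U"
    using lcs_convex_nbhd[OF lcs \<open>openin tau U\<close> \<open>x0 \<in> U\<close>] by blast
  obtain F0 \<delta> where "finite F0" "\<delta> > 0"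
    and W0W: "{g \<in> dual_space tau. \<forall>y\<in>F0. \<bar>g y - xs0 y\<bar> < \<delta>} \<subseteq> W"
    using weak_star_nbhd_contains_basic[OF \<open>openin (weak_star tau) W\<close> \<open>xs0 \<in> W\<close>] by blast
  let ?L = "UNIV \<times> dual_space tau \<times> (UNIV :: real set)"
  let ?W0 = "{g \<in> dual_space tau. \<forall>y\<in>F0. \<bar>g y - xs0 y\<bar> < \<delta>}"
  define A where "A = {(x, q, s). (x, q) \<in> Zset tau \<and> h (x, q) \<le> ereal s}"
  define B where "B = ((+) x0 ` C) \<times> ?W0 \<times> {..<r}"
  have AL: "A \<subseteq> ?L" and BL: "B \<subseteq> ?L"
    by (auto simp: A_def B_def Zset_def)
  have "convex A" "convex B"
    unfolding A_def B_def using cvx C(2)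
    by (auto intro!: convex_epigraph_Z convex_Times convex_translation convex_weak_star_basic_nbhd)
  have disjoint: "A \<inter> B = {}"
  proof (intro equalityI subsetI)
    fix v assume "v \<in> A \<inter> B"
    then obtain x q s where "v = (x, q, s)" "h (x, q) \<le> ereal s" "x \<in> U" "q \<in> W" "s < r"
      using CU W0W by (auto simp: A_def B_def)
    have "ereal r < h (x, q)"
      using above \<open>x \<in> U\<close> \<open>q \<in> W\<close> by blast
    also have "h (x, q) \<le> ereal s"
      by fact
    finally have "ereal r < ereal s" .
    with \<open>s < r\<close> show "v \<in> {}"
      by simp
  qed simp
  have a0: "(xa, ga, ha) \<in> A" and b0: "(x0, xs0, r - 1) \<in> B"
    using za C(3) xs0 \<open>\<delta> > 0\<close> by (auto simp: A_def B_def image_iff)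
  have core: "\<exists>e>0. (x0, xs0, r - 1) + e *\<^sub>R d \<in> B" if "d \<in> ?L" for d
    unfolding B_def using box_core_point[OF lcs C(1,3) \<open>finite F0\<close> \<open>\<delta> > 0\<close> xs0 that] .
  show ?thesis
  proof (rule convex_separation_core_point[OF subspace_Z3 AL BL \<open>convex A\<close> \<open>convex B\<close> disjoint a0 b0])
    fix e F assume "e > 0"
      and add: "\<And>u v. u \<in> ?L \<Longrightarrow> v \<in> ?L \<Longrightarrow> F (u + v) = F u + F v"
      and scale: "\<And>c u. u \<in> ?L \<Longrightarrow> F (c *\<^sub>R u) = c * F u"
      and sep: "\<And>a b. a \<in> A \<Longrightarrow> b \<in> B \<Longrightarrow> F b \<le> F a"
      and gap: "\<And>a. a \<in> A \<Longrightarrow> F (x0, xs0, r - 1) + e \<le> F a"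
    show ?thesis
    proof (rule that[OF \<open>e > 0\<close> C(1,3) \<open>finite F0\<close> \<open>\<delta> > 0\<close> add scale])
      fix x q s c g t
      assume "(x, q) \<in> Zset tau" "h (x, q) \<le> ereal s" "c \<in> C" "g \<in> dual_space tau"
        "\<forall>y\<in>F0. \<bar>g y - xs0 y\<bar> < \<delta>" "t < r"
      then show "F (x0 + c, g, t) \<le> F (x, q, s)"
        by (intro sep) (auto simp: A_def B_def)
    next
      fix x q s assume "(x, q) \<in> Zset tau" "h (x, q) \<le> ereal s"
      then show "F (x0, xs0, r - 1) + e \<le> F (x, q, s)"
        by (intro gap) (simp add: A_def)
    qed
  qed (rule core)
qed

lemma mult_le_of_forall_less:
  fixes a r X :: real
  assumes "a \<ge> 0" "\<And>t. t < r \<Longrightarrow> t * a \<le> X"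
  shows "r * a \<le> X"
proof (cases "a = 0")
  case True
  then show ?thesis
    using assms(2)[of "r - 1"] by simp
next
  case False
  with assms(1) have "a > 0"
    by simp
  have "r \<le> X / a"
  proof (rule dense_le)
    fix t assume "t < r"
    then have "t * a \<le> X"
      by (rule assms(2))
    with \<open>a > 0\<close> show "t \<le> X / a"
      by (simp add: pos_le_divide_eq)
  qed
  with \<open>a > 0\<close> show ?thesis
    by (simp add: pos_le_divide_eq)
qed

text \<open>A closed hyperplane in $X \times X^* \times \mathbb{R}$ separating the epigraph of \<open>h\<close> from a point
  \<open>(x0, xs0, r)\<close> below it: \<open>a \<ge> 0\<close> is the coefficient of the last coordinate, and vertical
  hyperplanes (\<open>a = 0\<close>) separate strictly.\<close>

lemma epigraph_separation:
  fixes h :: "'a::real_vector \<times> ('a \<Rightarrow> real) \<Rightarrow> ereal"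
  assumes lcs: "lcs tau" and cvx: "convex_Z tau h" and lsc: "lsc_Z tau h"
    and za: "(xa, ga) \<in> Zset tau" "h (xa, ga) = ereal ha"
    and z0: "(x0, xs0) \<in> Zset tau" "ereal r < h (x0, xs0)"
  obtains f y a e where "f \<in> dual_space tau" "a \<ge> 0" "e > 0"
    and "\<And>x q s. (x, q) \<in> Zset tau \<Longrightarrow> h (x, q) \<le> ereal s \<Longrightarrow> f x0 + xs0 y + r * a \<le> f x + q y + s * a"
    and "\<And>x q s. (x, q) \<in> Zset tau \<Longrightarrow> h (x, q) \<le> ereal s \<Longrightarrow> a = 0 \<Longrightarrow> f x0 + xs0 y + e \<le> f x + q y"
proof -
  have xs0: "xs0 \<in> dual_space tau"
    using z0(1) by (simp add: Zset_def)
  obtain F e C F0 \<delta> where "e > 0" "openin tau C" "0 \<in> C" "finite F0" "\<delta> > 0"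
    and add: "\<And>u v. u \<in> UNIV \<times> dual_space tau \<times> UNIV \<Longrightarrow> v \<in> UNIV \<times> dual_space tau \<times> UNIV \<Longrightarrow>
      F (u + v) = F u + F v"
    and scale: "\<And>c u. u \<in> UNIV \<times> dual_space tau \<times> UNIV \<Longrightarrow> F (c *\<^sub>R u) = c * F u"
    and sep: "\<And>x q s c g t. (x, q) \<in> Zset tau \<Longrightarrow> h (x, q) \<le> ereal s \<Longrightarrow> c \<in> C \<Longrightarrow>
      g \<in> dual_space tau \<Longrightarrow> \<forall>y\<in>F0. \<bar>g y - xs0 y\<bar> < \<delta> \<Longrightarrow> t < r \<Longrightarrow> F (x0 + c, g, t) \<le> F (x, q, s)"
    and gap: "\<And>x q s. (x, q) \<in> Zset tau \<Longrightarrow> h (x, q) \<le> ereal s \<Longrightarrow> F (x0, xs0, r - 1) + e \<le> F (x, q, s)"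
    by (fact epigraph_box_separation[OF lcs cvx lsc za z0])
  have bounded: "F (x0 + c, g, r - 1) \<le> F (xa, ga, ha)"
    if "c \<in> C" "g \<in> dual_space tau" "\<forall>y\<in>F0. \<bar>g y - xs0 y\<bar> < \<delta>" for c g
    using sep[OF za(1) _ that] za(2) by simp
  obtain f y where "f \<in> dual_space tau"
    and rep: "\<And>x q s. q \<in> dual_space tau \<Longrightarrow> F (x, q, s) = f x + q y + s * F (0, 0, 1)"
    by (rule Z_functional_representation[OF lcs add scale \<open>openin tau C\<close> \<open>0 \<in> C\<close> \<open>finite F0\<close>
          \<open>\<delta> > 0\<close> xs0 bounded]) (assumption | rule that)+
  define a where "a = F (0, 0, 1)"
  have below: "f x0 + xs0 y + t * a \<le> f x + q y + s * a"
    if "(x, q) \<in> Zset tau" "h (x, q) \<le> ereal s" "t < r" for x q s t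
    using sep[OF that(1,2) \<open>0 \<in> C\<close> xs0 _ that(3)] \<open>\<delta> > 0\<close> that(1) xs0
    by (simp add: rep Zset_def a_def)
  have "a \<ge> 0"
  proof (rule ccontr)
    assume "\<not> a \<ge> 0"
    define D where "D = f x0 + xs0 y + (r - 1) * a - f xa - ga y - ha * a"
    have "0 \<le> (\<bar>D\<bar> + 1) / - a"
      using \<open>\<not> a \<ge> 0\<close> by (intro divide_nonneg_pos) auto
    with za(2) have "h (xa, ga) \<le> ereal (ha + (\<bar>D\<bar> + 1) / - a)"
      by simp
    from below[OF za(1) this, of "r - 1"]
    have "f x0 + xs0 y + (r - 1) * a \<le> f xa + ga y + (ha + (\<bar>D\<bar> + 1) / - a) * a"
      by simp
    also have "(ha + (\<bar>D\<bar> + 1) / - a) * a = ha * a - (\<bar>D\<bar> + 1)"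
      using \<open>\<not> a \<ge> 0\<close> by (simp add: field_simps)
    finally have "D \<le> - (\<bar>D\<bar> + 1)"
      by (simp add: D_def)
    then show False
      by linarith
  qed
  show ?thesis
  proof (rule that[OF \<open>f \<in> dual_space tau\<close> \<open>a \<ge> 0\<close> \<open>e > 0\<close>])
    fix x q s assume "(x, q) \<in> Zset tau" "h (x, q) \<le> ereal s"
    then have "t * a \<le> f x + q y + s * a - f x0 - xs0 y" if "t < r" for t
      using below that by fastforce
    from mult_le_of_forall_less[of a r, OF \<open>a \<ge> 0\<close> this] show "f x0 + xs0 y + r * a \<le> f x + q y + s * a"
      by simp
  next
    fix x q s assume "(x, q) \<in> Zset tau" "h (x, q) \<le> ereal s" "a = 0"
    then show "f x0 + xs0 y + e \<le> f x + q y"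
      using gap[of x q s] xs0 by (simp add: rep Zset_def a_def)
  qed
qed

text \<open>A proper convex lsc function on \<open>Z\<close> is the supremum of its continuous affine minorants
  \<open>(x, x*) \<mapsto> \<alpha> + \<langle>x, y*\<rangle> + \<langle>y, x*\<rangle>\<close>.  The given minorant is only needed to tilt a vertical
  separating hyperplane.\<close>

lemma affine_minorant_above:
  fixes h :: "'a::real_vector \<times> ('a \<Rightarrow> real) \<Rightarrow> ereal"
  assumes lcs: "lcs tau" and cvx: "convex_Z tau h" and lsc: "lsc_Z tau h"
    and ps: "ps \<in> dual_space tau"
    and minor: "\<And>w. w \<in> Zset tau \<Longrightarrow> ereal (\<beta> + ps (fst w) + snd w p) \<le> h w"
    and za: "(xa, ga) \<in> Zset tau" "h (xa, ga) \<noteq> \<infinity>"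
    and z0: "(x0, xs0) \<in> Zset tau" "ereal r < h (x0, xs0)"
  obtains \<alpha> y ys where "ys \<in> dual_space tau"
    and "\<And>w. w \<in> Zset tau \<Longrightarrow> ereal (\<alpha> + ys (fst w) + snd w y) \<le> h w"
    and "r \<le> \<alpha> + ys x0 + xs0 y"
proof -
  have xs0: "xs0 \<in> dual_space tau"
    using z0(1) by (simp add: Zset_def)
  have "h (xa, ga) \<noteq> - \<infinity>"
    using minor[OF za(1)] by auto
  with za(2) obtain ha where "h (xa, ga) = ereal ha"
    by (cases "h (xa, ga)") auto
  then obtain f y a e where f: "f \<in> dual_space tau" and "a \<ge> 0" "e > 0"
    and sep: "\<And>x q s. (x, q) \<in> Zset tau \<Longrightarrow> h (x, q) \<le> ereal s \<Longrightarrow> f x0 + xs0 y + r * a \<le> f x + q y + s * a"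
    and vertical: "\<And>x q s. (x, q) \<in> Zset tau \<Longrightarrow> h (x, q) \<le> ereal s \<Longrightarrow> a = 0 \<Longrightarrow>
      f x0 + xs0 y + e \<le> f x + q y"
    by (rule epigraph_separation[OF lcs cvx lsc za(1) _ z0]) (assumption | rule that)+
  have eval: "q (c *\<^sub>R u) = c * q u" "q (- u) = - q u" "q (u + v) = q u + q v" "q (u - v) = q u - q v"
    if "q \<in> dual_space tau" for q c u v
    using dual_space_linear[OF that] by (simp_all add: linear_scale linear_neg linear_add linear_diff)
  show ?thesis
  proof (cases "a = 0")
    case False
    with \<open>a \<ge> 0\<close> have "a > 0"
      by simp
    let ?\<alpha> = "r + (f x0 + xs0 y) / a"
    show ?thesis
    proof (rule that[of "(- 1 / a) *\<^sub>R f" ?\<alpha> "(- 1 / a) *\<^sub>R y"])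
      show "(- 1 / a) *\<^sub>R f \<in> dual_space tau"
        using dual_space_scaleR[OF f] .
      show "ereal (?\<alpha> + ((- 1 / a) *\<^sub>R f) (fst w) + snd w ((- 1 / a) *\<^sub>R y)) \<le> h w"
        if "w \<in> Zset tau" for w
      proof (rule ereal_le_real)
        fix s assume "h w \<le> ereal s"
        with sep[of "fst w" "snd w" s] that have "f x0 + xs0 y - f (fst w) - snd w y \<le> (s - r) * a"
          by (simp add: algebra_simps)
        with \<open>a > 0\<close> have "(f x0 + xs0 y - f (fst w) - snd w y) / a \<le> s - r"
          by (simp add: pos_divide_le_eq)
        moreover have "snd w \<in> dual_space tau"
          using that by (auto simp: Zset_def)
        ultimately show "ereal (?\<alpha> + ((- 1 / a) *\<^sub>R f) (fst w) + snd w ((- 1 / a) *\<^sub>R y)) \<le> ereal s"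
          by (simp add: eval diff_divide_distrib add_divide_distrib)
      qed
      show "r \<le> ?\<alpha> + ((- 1 / a) *\<^sub>R f) x0 + xs0 ((- 1 / a) *\<^sub>R y)"
        using \<open>a > 0\<close> xs0 by (simp add: eval field_simps)
    qed
  next
    case True
    define k where "k = max 0 ((r - (\<beta> + ps x0 + xs0 p)) / e)"
    have k: "k \<ge> 0" "r \<le> \<beta> + ps x0 + xs0 p + k * e"
      using \<open>e > 0\<close> by (auto simp: k_def max_def field_simps)
    let ?\<alpha> = "\<beta> + k * (f x0 + xs0 y + e)"
    show ?thesis
    proof (rule that[of "ps - k *\<^sub>R f" ?\<alpha> "p - k *\<^sub>R y"])
      show "ps - k *\<^sub>R f \<in> dual_space tau"
        using subspace_diff[OF subspace_dual_space ps dual_space_scaleR[OF f]] .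
      show "ereal (?\<alpha> + (ps - k *\<^sub>R f) (fst w) + snd w (p - k *\<^sub>R y)) \<le> h w" if "w \<in> Zset tau" for w
      proof (rule ereal_le_real)
        fix s assume "h w \<le> ereal s"
        with vertical[of "fst w" "snd w" s] that True
        have "k * (f x0 + xs0 y + e) \<le> k * (f (fst w) + snd w y)"
          using k(1) by (intro mult_left_mono) auto
        moreover have "snd w \<in> dual_space tau"
          using that by (auto simp: Zset_def)
        ultimately have "?\<alpha> + (ps - k *\<^sub>R f) (fst w) + snd w (p - k *\<^sub>R y) \<le> \<beta> + ps (fst w) + snd w p"
          by (simp add: eval algebra_simps)
        with minor[OF that] \<open>h w \<le> ereal s\<close>
        show "ereal (?\<alpha> + (ps - k *\<^sub>R f) (fst w) + snd w (p - k *\<^sub>R y)) \<le> ereal s"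
          by (meson ereal_less_eq(3) order_trans)
      qed
      show "r \<le> ?\<alpha> + (ps - k *\<^sub>R f) x0 + xs0 (p - k *\<^sub>R y)"
        using k xs0 by (simp add: eval algebra_simps)
    qed
  qed
qed

subsection \<open>From representability to identification\<close>

lemma R_class_tangent:
  assumes h: "h \<in> R_class tau" and u: "(u, us) \<in> Zset tau" "h (u, us) = cpl (u, us)"
    and w: "w \<in> Zset tau"
  shows "ereal (snd w u + us (fst w) - us u) \<le> h w"
proof -
  obtain y ys where w_eq: "w = (y, ys)"
    by fastforce
  have "ys \<in> dual_space tau" "us \<in> dual_space tau"
    using u w by (auto simp: w_eq Zset_def)
  then have above: "cpl (t *\<^sub>R y + (1 - t) *\<^sub>R u, \<lambda>v. t * ys v + (1 - t) * us v)
      \<le> h (t *\<^sub>R y + (1 - t) *\<^sub>R u, \<lambda>v. t * ys v + (1 - t) * us v)" for t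
    using h by (auto simp: R_class_def Zset_def dual_space_lincomb)
  have "convex_Z tau h"
    using h by (simp add: R_class_def)
  from convex_Z_tangent_ineq[OF this u(1) w[unfolded w_eq] _ zero_less_one above] u(2) show ?thesis
    by (simp add: w_eq)
qed

lemma monotone_if_representable:
  assumes "h \<in> R_class tau" "S \<subseteq> Zset tau" "\<And>z. z \<in> S \<Longrightarrow> h z = cpl z"
  shows "monotone_op S"
  unfolding monotone_op_def
proof (intro allI impI, elim conjE)
  fix x f y g assume "(x, f) \<in> S" "(y, g) \<in> S"
  with R_class_tangent[OF assms(1), of x f "(y, g)"] assms(2,3) have "ereal (g x + f y - f x) \<le> ereal (g y)"
    by (force simp: cpl_def)
  then show "f x - f y - g x + g y \<ge> 0"
    by simp
qed

lemma fitz_tangent_if_NI: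
  assumes T: "T \<subseteq> UNIV \<times> dual_space tau" and "alg_open V" and NI: "V_NI tau V T"
    and z: "(x, xs) \<in> Zset tau" "x \<in> V" "fitz (restr T V) (x, xs) \<le> cpl (x, xs)"
    and w: "w \<in> Zset tau"
  shows "ereal (snd w x + xs (fst w) - xs x) \<le> fitz (restr T V) w"
proof -
  obtain y ys where w_eq: "w = (y, ys)"
    by fastforce
  have "x \<in> core V"
    using \<open>alg_open V\<close> z(2) by (simp add: alg_open_def)
  then obtain e where "e > 0" and segment: "\<And>t. 0 \<le> t \<Longrightarrow> t \<le> e \<Longrightarrow> x + t *\<^sub>R (y - x) \<in> V"
    unfolding core_def by blast
  have "convex_Z tau (fitz (restr T V))"
    using T by (intro convex_Z_fitz) (auto simp: restr_def)
  moreover have "cpl (t *\<^sub>R y + (1 - t) *\<^sub>R x, \<lambda>v. t * ys v + (1 - t) * xs v)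
      \<le> fitz (restr T V) (t *\<^sub>R y + (1 - t) *\<^sub>R x, \<lambda>v. t * ys v + (1 - t) * xs v)"
    if "0 < t" "t \<le> e" for t
  proof -
    have "t *\<^sub>R y + (1 - t) *\<^sub>R x = x + t *\<^sub>R (y - x)"
      by (simp add: algebra_simps)
    with segment[of t] that have "t *\<^sub>R y + (1 - t) *\<^sub>R x \<in> V"
      by simp
    with NI z(1) w show ?thesis
      unfolding V_NI_def by (auto simp: w_eq Zset_def dual_space_lincomb)
  qed
  ultimately show ?thesis
    using convex_Z_tangent_ineq[of tau "fitz (restr T V)" x xs y ys e] z w \<open>e > 0\<close> by (simp add: w_eq)
qed

lemma monotone_identifies_if_representable_NI:
  assumes lcs: "lcs tau" and T: "T \<subseteq> UNIV \<times> dual_space tau" and "alg_open V"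
    and rep: "V_representable tau V T" and NI: "V_NI tau V T"
  shows "M_class (restr T V) \<and> V_identifies tau V T"
proof -
  let ?S = "restr T V"
  obtain h where h: "h \<in> R_class tau" and hS: "{z \<in> Zset tau. h z = cpl z} \<inter> (V \<times> UNIV) = ?S"
    using rep unfolding V_representable_def by blast
  have SZ: "?S \<subseteq> Zset tau"
    using T by (auto simp: restr_def Zset_def)
  have Sh: "h z = cpl z" if "z \<in> ?S" for z
    using hS that by blast
  obtain u0 us0 where s0: "(u0, us0) \<in> ?S"
    using rep unfolding V_representable_def restr_def by blast
  have "M_class ?S"
    using monotone_if_representable[OF h SZ Sh] s0 by (auto simp: M_class_def)
  moreover have "z \<in> T" if z: "z \<in> Zset tau" "fitz ?S z \<le> cpl z" "fst z \<in> V" for z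
  proof -
    obtain x xs where z_eq: "z = (x, xs)"
      by fastforce
    have "h z \<le> cpl z"
    proof (rule ccontr)
      assume "\<not> h z \<le> cpl z"
      then have "cpl z < h z"
        by simp
      then obtain r where r: "cpl z < ereal r" "ereal r < h z"
        using ereal_dense2 by blast
      have minor: "ereal (- us0 u0 + us0 (fst w) + snd w u0) \<le> h w" if "w \<in> Zset tau" for w
        using R_class_tangent[OF h _ Sh[OF s0] that] s0 SZ by (auto simp: algebra_simps)
      have "convex_Z tau h" "lsc_Z tau h"
        using h by (auto simp: R_class_def)
      moreover have "us0 \<in> dual_space tau" "(u0, us0) \<in> Zset tau" "h (u0, us0) \<noteq> \<infinity>"
        using s0 SZ Sh[OF s0] by (auto simp: Zset_def)
      moreover have "(x, xs) \<in> Zset tau" "ereal r < h (x, xs)"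
        using z(1) r(2) by (simp_all add: z_eq)
      ultimately obtain \<alpha> y ys where "ys \<in> dual_space tau"
        and affine: "\<And>w. w \<in> Zset tau \<Longrightarrow> ereal (\<alpha> + ys (fst w) + snd w y) \<le> h w"
        and "r \<le> \<alpha> + ys x + xs y"
        using affine_minorant_above[OF lcs _ _ _ minor] by metis
      have "ereal (ys x + xs y - xs x) \<le> fitz ?S (y, ys)"
        using fitz_tangent_if_NI[OF T \<open>alg_open V\<close> NI, of x xs "(y, ys)"] z \<open>ys \<in> dual_space tau\<close>
        by (simp add: z_eq Zset_def)
      also have "fitz ?S (y, ys) \<le> ereal (- \<alpha>)"
        unfolding fitz_le_iff
      proof (clarify)
        fix u us assume "(u, us) \<in> ?S"
        with affine[of "(u, us)"] SZ Sh have "ereal (\<alpha> + ys u + us y) \<le> ereal (us u)"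
          by (force simp: cpl_def)
        then show "ereal (snd (y, ys) u + us (fst (y, ys)) - us u) \<le> ereal (- \<alpha>)"
          by simp
      qed
      finally have "ys x + xs y - xs x \<le> - \<alpha>"
        by simp
      with r(1) \<open>r \<le> \<alpha> + ys x + xs y\<close> show False
        by (simp add: z_eq cpl_def)
    qed
    with h z(1) have "h z = cpl z"
      by (auto simp: R_class_def intro: antisym)
    with z(1,3) have "z \<in> {z \<in> Zset tau. h z = cpl z} \<inter> (V \<times> UNIV)"
      by (auto simp: z_eq)
    with hS show ?thesis
      by (simp add: restr_def)
  qed
  then have "V_identifies tau V T"
    unfolding V_identifies_def by auto
  ultimately show ?thesis
    by blast
qed

theorem theorem3p1:
  fixes tau :: "'a::real_vector topology"
    and T :: "('a \<times> ('a \<Rightarrow> real)) set"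
    and V :: "'a set"
  assumes "lcs tau"
    and "\<exists>x::'a. x \<noteq> 0"
    and "T \<subseteq> UNIV \<times> dual_space tau"
    and "V \<inter> Domain T \<noteq> {}"
  shows "((M_class (restr T V) \<and> V_identifies tau V T) \<longrightarrow>
            (V_representable tau V T \<and> V_locates tau V T))
       \<and> ((V_representable tau V T \<and> V_locates tau V T) \<longrightarrow>
            (V_representable tau V T \<and> V_NI tau V T))
       \<and> (alg_open V \<longrightarrow>
            ((V_representable tau V T \<and> V_NI tau V T) \<longrightarrow>
             (M_class (restr T V) \<and> V_identifies tau V T)))"
  using representable_locates_if_identifies[OF assms(3,4)] NI_if_locates
    monotone_identifies_if_representable_NI[OF assms(1,3)]
  by blast

end
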